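(* There exists a computable enumeration of all effective quasi-Polish $\omega$-continuous domains; namely, there is a computable sequence $(\prec_i)_{i\in\omega}$ (given by c.e. indices) of c.e. interpolable transitive relations on $\omega$ such that for every c.e. interpolable transitive relation $\prec$ on $\omega$ there is $i\in\omega$ with $\mathcal{I}(\prec_i)$ computably homeomorphic to $\mathcal{I}(\prec)$.
   Context: A transitive relation $\prec$ on $\omega$ is interpolable if each initial segment $\{x\mid x\prec y\}$ is directed (non-empty and any two elements have an upper bound in it). For a transitive relation $\prec$, an ideal is a non-empty set $I\subseteq\omega$ which is a lower set and directed; $\mathcal{I}(\prec)$ is the space of ideals with topology generated by $[n]_\prec=\{I\mid n\in I\}$, numbered by $n$. For interpolable c.e. $\prec$, $\mathcal{I}(\prec)$ is an $\omega$-continuous domain and an effective quasi-Polish space. A computable homeomorphism is a homeomorphism such that preimages of basic open sets under it and its inverse are uniformly c.e. unions of basic open sets. *)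

theory Defs
  imports "HOL-Analysis.Analysis"
begin

datatype recf = Zero | Succ | Proj nat | Comp recf "recf list" | Prec recf recf | Mu recf

inductive eval :: "recf \<Rightarrow> nat list \<Rightarrow> nat \<Rightarrow> bool" where
  eval_Zero: "eval Zero xs 0"
| eval_Succ: "eval Succ (x # xs) (Suc x)"
| eval_Proj: "i < length xs \<Longrightarrow> eval (Proj i) xs (xs ! i)"
| eval_Comp: "list_all2 (\<lambda>g y. eval g xs y) gs ys \<Longrightarrow> eval f ys z \<Longrightarrow> eval (Comp f gs) xs z"
| eval_Prec0: "eval f xs y \<Longrightarrow> eval (Prec f g) (0 # xs) y"
| eval_PrecS: "eval (Prec f g) (n # xs) y \<Longrightarrow> eval g (n # y # xs) z
                 \<Longrightarrow> eval (Prec f g) (Suc n # xs) z"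
| eval_Mu: "eval f (n # xs) 0 \<Longrightarrow> (\<forall>m<n. \<exists>k. eval f (m # xs) (Suc k))
                 \<Longrightarrow> eval (Mu f) xs n"

definition ce_rel :: "(nat \<Rightarrow> nat \<Rightarrow> bool) \<Rightarrow> bool" where
  "ce_rel R \<longleftrightarrow> (\<exists>f. \<forall>x y. R x y \<longleftrightarrow> (\<exists>z. eval f [x, y] z))"

definition uniformly_ce_rels :: "(nat \<Rightarrow> nat \<Rightarrow> nat \<Rightarrow> bool) \<Rightarrow> bool" where
  "uniformly_ce_rels Rs \<longleftrightarrow> (\<exists>f. \<forall>i x y. Rs i x y \<longleftrightarrow> (\<exists>z. eval f [i, x, y] z))"

definition directed_in :: "(nat \<Rightarrow> nat \<Rightarrow> bool) \<Rightarrow> nat set \<Rightarrow> bool" where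
  "directed_in R A \<longleftrightarrow> A \<noteq> {} \<and> (\<forall>x\<in>A. \<forall>y\<in>A. \<exists>z\<in>A. R x z \<and> R y z)"

definition interpolable :: "(nat \<Rightarrow> nat \<Rightarrow> bool) \<Rightarrow> bool" where
  "interpolable R \<longleftrightarrow> (\<forall>y. directed_in R {x. R x y})"

definition is_ideal :: "(nat \<Rightarrow> nat \<Rightarrow> bool) \<Rightarrow> nat set \<Rightarrow> bool" where
  "is_ideal R I \<longleftrightarrow> directed_in R I \<and> (\<forall>x y. y \<in> I \<longrightarrow> R x y \<longrightarrow> x \<in> I)"

definition ideals :: "(nat \<Rightarrow> nat \<Rightarrow> bool) \<Rightarrow> nat set set" where
  "ideals R = {I. is_ideal R I}"

definition basic_open :: "(nat \<Rightarrow> nat \<Rightarrow> bool) \<Rightarrow> nat \<Rightarrow> nat set set" where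
  "basic_open R n = {I \<in> ideals R. n \<in> I}"

definition ideal_space :: "(nat \<Rightarrow> nat \<Rightarrow> bool) \<Rightarrow> nat set topology" where
  "ideal_space R = topology_generated_by (range (basic_open R))"

definition ce_preimages :: "(nat \<Rightarrow> nat \<Rightarrow> bool) \<Rightarrow> (nat \<Rightarrow> nat \<Rightarrow> bool)
    \<Rightarrow> (nat set \<Rightarrow> nat set) \<Rightarrow> bool" where
  "ce_preimages R1 R2 h \<longleftrightarrow> (\<exists>W. ce_rel W \<and>
     (\<forall>n. {I \<in> ideals R1. h I \<in> basic_open R2 n} = (\<Union>m\<in>{m. W n m}. basic_open R1 m)))"

definition computably_homeomorphic :: "(nat \<Rightarrow> nat \<Rightarrow> bool) \<Rightarrow> (nat \<Rightarrow> nat \<Rightarrow> bool) \<Rightarrow> bool" where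
  "computably_homeomorphic R1 R2 \<longleftrightarrow> (\<exists>h g.
     homeomorphic_maps (ideal_space R1) (ideal_space R2) h g \<and>
     ce_preimages R1 R2 h \<and> ce_preimages R2 R1 g)"

end

theory Submission
  imports Defs "HOL-Library.Nat_Bijection"
begin

text \<open>Enumerate all c.e. relations by program codes \<open>e\<close> and stages \<open>t\<close>. From the
  stagewise enumeration of any relation, build its interpolant on \<open>\<nat>\<close>: the even number \<open>2 * a\<close>
  represents the point \<open>a\<close>, and odd numbers are witnesses \<open>\<langle>x1, x2, y, t\<rangle>\<close> lying below \<open>y\<close>,
  which are placed above \<open>x1\<close> and \<open>x2\<close> once both are seen below \<open>y\<close>. The interpolant is
  transitive and interpolable whatever the relation, and it is c.e. uniformly in \<open>e\<close>, since
  each of its stages is checked by a bounded search. If the enumerated relation \<open>R\<close> is itself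
  transitive and interpolable, every witness can be realized by a point of \<open>R\<close> between its
  neighbours; the interpolant is then the pullback of \<open>R\<close> along the realization map, and taking
  preimages under \<open>a \<mapsto> 2 * a\<close> and under the realization map are mutually inverse computable
  homeomorphisms of the ideal spaces.\<close>

section \<open>Primitive recursive expressions\<close>

text \<open>Variables are de Bruijn indices into an environment (out-of-range variables denote 0).
  In \<open>IterE m b s\<close> the step \<open>s\<close> sees the counter as variable 0 and the accumulator as variable 1.\<close>

datatype prexp = VarE nat | NumE nat | SucE prexp | AddE prexp prexp | SubE prexp prexp
  | MulE prexp prexp | IterE prexp prexp prexp

primrec iter :: "nat \<Rightarrow> nat \<Rightarrow> (nat \<Rightarrow> nat \<Rightarrow> nat) \<Rightarrow> nat" where
  "iter 0 b f = b"
| "iter (Suc k) b f = f k (iter k b f)"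

fun sem :: "prexp \<Rightarrow> nat list \<Rightarrow> nat" where
  "sem (VarE i) env = (if i < length env then env ! i else 0)"
| "sem (NumE k) env = k"
| "sem (SucE e) env = Suc (sem e env)"
| "sem (AddE a b) env = sem a env + sem b env"
| "sem (SubE a b) env = sem a env - sem b env"
| "sem (MulE a b) env = sem a env * sem b env"
| "sem (IterE m b s) env = iter (sem m env) (sem b env) (\<lambda>k r. sem s (k # r # env))"

lemma iter_funpow: "iter k b (\<lambda>_ r. f r) = (f ^^ k) b"
  by (induct k) auto

primrec recf_const :: "nat \<Rightarrow> recf" where
  "recf_const 0 = Zero"
| "recf_const (Suc k) = Comp Succ [recf_const k]"

definition recf_add :: recf where "recf_add = Prec (Proj 0) (Comp Succ [Proj 1])"
definition recf_pred :: recf where "recf_pred = Prec Zero (Proj 0)"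
definition recf_rsub :: recf where "recf_rsub = Prec (Proj 0) (Comp recf_pred [Proj 1])"
definition recf_mult :: recf where "recf_mult = Prec Zero (Comp recf_add [Proj 1, Proj 2])"

fun compile :: "nat \<Rightarrow> prexp \<Rightarrow> recf" where
  "compile n (VarE i) = (if i < n then Proj i else Zero)"
| "compile n (NumE k) = recf_const k"
| "compile n (SucE e) = Comp Succ [compile n e]"
| "compile n (AddE a b) = Comp recf_add [compile n a, compile n b]"
| "compile n (SubE a b) = Comp recf_rsub [compile n b, compile n a]"
| "compile n (MulE a b) = Comp recf_mult [compile n a, compile n b]"
| "compile n (IterE m b s) = Comp (Prec (compile n b) (compile (Suc (Suc n)) s))
      (compile n m # map Proj [0..<n])"

lemma eval_ProjI: "i < length xs \<Longrightarrow> y = xs ! i \<Longrightarrow> eval (Proj i) xs y"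
  using eval_Proj by simp

lemma eval_Succ1: "eval Succ [x] (Suc x)"
  using eval_Succ[of x "[]"] by simp

lemma eval_Comp1: "eval g xs y \<Longrightarrow> eval f [y] z \<Longrightarrow> eval (Comp f [g]) xs z"
  by (rule eval_Comp[of _ _ "[y]"]) auto

lemma eval_Comp2:
  "eval g1 xs y1 \<Longrightarrow> eval g2 xs y2 \<Longrightarrow> eval f [y1, y2] z \<Longrightarrow> eval (Comp f [g1, g2]) xs z"
  by (rule eval_Comp[of _ _ "[y1, y2]"]) auto

lemma eval_Projs: "list_all2 (\<lambda>g y. eval g env y) (map Proj [0..<length env]) env"
  by (auto simp: list_all2_conv_all_nth intro!: eval_ProjI)

lemma eval_Comp_Projs:
  "eval g env y \<Longrightarrow> eval f (y # env) z \<Longrightarrow> eval (Comp f (g # map Proj [0..<length env])) env z"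
  by (rule eval_Comp[of _ _ "y # env"]) (simp_all add: eval_Projs)

lemma eval_Prec_iter:
  assumes "eval F env b" "\<And>k r. eval G (k # r # env) (s k r)"
  shows "eval (Prec F G) (k # env) (iter k b s)"
  by (induct k) (auto intro: eval_Prec0 eval_PrecS assms)

lemma eval_recf_const: "eval (recf_const k) xs k"
  by (induct k) (auto intro: eval_Zero eval_Comp1 eval_Succ1)

lemma eval_recf_add: "eval recf_add [n, m] (n + m)"
proof -
  have "eval recf_add [n, m] (iter n m (\<lambda>k r. Suc r))"
    unfolding recf_add_def
    by (rule eval_Prec_iter) (auto intro!: eval_ProjI eval_Comp1 eval_Succ1)
  moreover have "iter n m (\<lambda>k r. Suc r) = n + m" by (induct n) auto
  ultimately show ?thesis by simp
qed

lemma eval_recf_pred: "eval recf_pred [n] (n - 1)"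
proof -
  have "eval recf_pred [n] (iter n 0 (\<lambda>k r. k))"
    unfolding recf_pred_def
    by (rule eval_Prec_iter) (auto intro!: eval_ProjI eval_Zero)
  moreover have "iter n 0 (\<lambda>k r. k) = n - 1" by (cases n) auto
  ultimately show ?thesis by simp
qed

lemma eval_recf_rsub: "eval recf_rsub [m, n] (n - m)"
proof -
  have "eval recf_rsub [m, n] (iter m n (\<lambda>k r. r - 1))"
    unfolding recf_rsub_def
    by (rule eval_Prec_iter) (auto intro!: eval_ProjI eval_Comp1 eval_recf_pred[simplified])
  moreover have "iter m n (\<lambda>k r. r - 1) = n - m" by (induct m) auto
  ultimately show ?thesis by simp
qed

lemma eval_recf_mult: "eval recf_mult [n, m] (n * m)"
proof -
  have "eval recf_mult [n, m] (iter n 0 (\<lambda>k r. r + m))"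
    unfolding recf_mult_def
    by (rule eval_Prec_iter) (auto intro!: eval_ProjI eval_Comp2 eval_recf_add eval_Zero)
  moreover have "iter n 0 (\<lambda>k r. r + m) = n * m" by (induct n) auto
  ultimately show ?thesis by simp
qed

lemma eval_compile: "length env = n \<Longrightarrow> eval (compile n e) env (sem e env)"
proof (induct e arbitrary: n env)
  case (VarE i) then show ?case by (auto intro: eval_ProjI eval_Zero)
next
  case (NumE k) then show ?case by (simp add: eval_recf_const)
next
  case (SucE e) then show ?case by (auto intro!: eval_Comp1 eval_Succ1)
next
  case (AddE a b) then show ?case by (auto intro!: eval_Comp2 eval_recf_add)
next
  case (SubE a b) then show ?case by (auto intro!: eval_Comp2 eval_recf_rsub)
next
  case (MulE a b) then show ?case by (auto intro!: eval_Comp2 eval_recf_mult)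
next
  case (IterE m b s)
  have "eval (compile (Suc (Suc n)) s) (k # r # env) (sem s (k # r # env))" for k r
    using IterE(3)[of "k # r # env"] IterE(4) by simp
  then have "eval (Prec (compile n b) (compile (Suc (Suc n)) s)) (sem m env # env) (sem (IterE m b s) env)"
    using IterE(2,4) by (auto intro: eval_Prec_iter)
  then show ?case
    using IterE(1)[of env] IterE(4) eval_Comp_Projs[of "compile n m" env "sem m env"] by simp
qed

lemma eval_deterministic: "eval f xs y \<Longrightarrow> eval f xs y' \<Longrightarrow> y' = y"
proof (induct arbitrary: y' rule: eval.induct)
  case (eval_Comp xs gs ys f z)
  from eval_Comp(4) obtain ys' where ys': "list_all2 (\<lambda>g y. eval g xs y) gs ys'" "eval f ys' y'"
    by (cases rule: eval.cases) auto
  have "ys' = ys" using eval_Comp(1) ys'(1)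
    by (induct arbitrary: ys' rule: list_all2_induct) (auto simp: list_all2_Cons1)
  then show ?case using eval_Comp(3) ys'(2) by simp
next
  case (eval_Mu f n xs)
  from eval_Mu(4) obtain n' where n': "y' = n'" "eval f (n' # xs) 0"
    "\<forall>m<n'. \<exists>k. eval f (m # xs) (Suc k)"
    by (cases rule: eval.cases) auto
  have "\<not> n < n'"
  proof
    assume "n < n'"
    then obtain k where "eval f (n # xs) (Suc k)" using n'(3) by blast
    then show False using eval_Mu(2) by blast
  qed
  moreover have "\<not> n' < n"
  proof
    assume "n' < n"
    then obtain k where "\<forall>y'. eval f (n' # xs) y' \<longrightarrow> y' = Suc k" using eval_Mu(3) by blast
    then show False using n'(2) by blast
  qed
  ultimately show ?case using n'(1) by simp
next
  case (eval_PrecS f g n xs y z)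
  from eval_PrecS(5) obtain y2 where "eval (Prec f g) (n # xs) y2" "eval g (n # y2 # xs) y'"
    by (cases rule: eval.cases) auto
  then show ?case using eval_PrecS(2,4) by auto
next
  case (eval_Prec0 f xs y g)
  from eval_Prec0(3) show ?case using eval_Prec0(2) by (cases rule: eval.cases) auto
next
  case (eval_Zero xs) from eval_Zero(1) show ?case by (cases rule: eval.cases) auto
next
  case (eval_Succ x xs) from eval_Succ(1) show ?case by (cases rule: eval.cases) auto
next
  case (eval_Proj i xs) from eval_Proj(2) show ?case by (cases rule: eval.cases) auto
qed

lemma eval_compile_iff: "length env = n \<Longrightarrow> eval (compile n e) env y \<longleftrightarrow> y = sem e env"
  using eval_compile eval_deterministic by blast

lemma eval_Comp_iff:
  assumes "list_all2 (\<lambda>g y. eval g xs y) gs vs"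
  shows "eval (Comp f gs) xs z \<longleftrightarrow> eval f vs z"
proof
  assume "eval (Comp f gs) xs z"
  then obtain ys where ys: "list_all2 (\<lambda>g y. eval g xs y) gs ys" "eval f ys z"
    by (cases rule: eval.cases) auto
  have "ys = vs"
  proof (rule nth_equalityI)
    show "length ys = length vs" using ys(1) assms by (metis list_all2_lengthD)
    fix k assume "k < length ys"
    then show "ys ! k = vs ! k" using ys(1) assms eval_deterministic list_all2_nthD list_all2_lengthD
      by metis
  qed
  then show "eval f vs z" using ys(2) by simp
qed (rule eval_Comp[OF assms])

lemma halts_Mu_compile_iff:
  assumes "length env = n"
  shows "(\<exists>z. eval (Mu (compile (Suc n) p)) env z) \<longleftrightarrow> (\<exists>w. sem p (w # env) = 0)"
proof
  assume "\<exists>z. eval (Mu (compile (Suc n) p)) env z"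
  then obtain z where "eval (Mu (compile (Suc n) p)) env z" by blast
  then have "eval (compile (Suc n) p) (z # env) 0" by (cases rule: eval.cases) auto
  then show "\<exists>w. sem p (w # env) = 0" using eval_compile_iff assms by auto
next
  assume "\<exists>w. sem p (w # env) = 0"
  then obtain w where w: "sem p (w # env) = 0" "\<forall>m<w. sem p (m # env) \<noteq> 0"
    using exists_least_iff[of "\<lambda>w. sem p (w # env) = 0"] by blast
  have "eval (Mu (compile (Suc n) p)) env w"
  proof (rule eval_Mu)
    show "eval (compile (Suc n) p) (w # env) 0" using w assms eval_compile[of "w # env" "Suc n" p] by simp
    show "\<forall>m<w. \<exists>k. eval (compile (Suc n) p) (m # env) (Suc k)"
    proof (intro allI impI)
      fix m assume "m < w"
      then obtain k where "sem p (m # env) = Suc k" using w not0_implies_Suc by blast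
      then show "\<exists>k. eval (compile (Suc n) p) (m # env) (Suc k)"
        using assms eval_compile[of "m # env" "Suc n" p] by auto
    qed
  qed
  then show "\<exists>z. eval (Mu (compile (Suc n) p)) env z" by blast
qed

lemma ce_rel_prexp: "ce_rel (\<lambda>x y. \<exists>w. sem p [w, x, y] = 0)"
  unfolding ce_rel_def
  using halts_Mu_compile_iff[of "[_, _]" 2 p] by (intro exI[of _ "Mu (compile (Suc 2) p)"]) simp

lemma uniformly_ce_rels_prexp: "uniformly_ce_rels (\<lambda>i x y. \<exists>w. sem p [w, i, x, y] = 0)"
  unfolding uniformly_ce_rels_def
  using halts_Mu_compile_iff[of "[_, _, _]" 3 p] by (intro exI[of _ "Mu (compile (Suc 3) p)"]) simp

lemma ce_rel_instance:
  assumes "uniformly_ce_rels Rs"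
  shows "ce_rel (\<lambda>x y. Rs i x (sem g [x, y]))"
proof -
  obtain f where f: "\<And>i x y. Rs i x y \<longleftrightarrow> (\<exists>z. eval f [i, x, y] z)"
    using assms unfolding uniformly_ce_rels_def by blast
  have "list_all2 (\<lambda>h v. eval h [x, y] v) [recf_const i, Proj 0, compile 2 g] [i, x, sem g [x, y]]"
    for x y by (simp add: eval_recf_const eval_ProjI eval_compile)
  then have "eval (Comp f [recf_const i, Proj 0, compile 2 g]) [x, y] z \<longleftrightarrow> eval f [i, x, sem g [x, y]] z"
    for x y z by (rule eval_Comp_iff)
  then show ?thesis unfolding ce_rel_def f by blast
qed


fun shift :: "nat \<Rightarrow> prexp \<Rightarrow> prexp" where
  "shift c (VarE i) = (if i < c then VarE i else VarE (Suc i))"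
| "shift c (NumE k) = NumE k"
| "shift c (SucE e) = SucE (shift c e)"
| "shift c (AddE a b) = AddE (shift c a) (shift c b)"
| "shift c (SubE a b) = SubE (shift c a) (shift c b)"
| "shift c (MulE a b) = MulE (shift c a) (shift c b)"
| "shift c (IterE m b s) = IterE (shift c m) (shift c b) (shift (Suc (Suc c)) s)"

lemma sem_shift: "c \<le> length env \<Longrightarrow> sem (shift c e) (take c env @ x # drop c env) = sem e env"
proof (induct e arbitrary: c env)
  case (VarE i)
  then show ?case by (auto simp: nth_append min_def nth_Cons' split: if_splits)
next
  case (IterE m b s)
  have "sem (shift (Suc (Suc c)) s) (k # r # take c env @ x # drop c env) = sem s (k # r # env)" for k r
    using IterE(3)[of "Suc (Suc c)" "k # r # env"] IterE(4) by simp
  then show ?case using IterE by simp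
qed auto

definition lift :: "prexp \<Rightarrow> prexp" where "lift e = shift 0 e"

lemma sem_lift[simp]: "sem (lift e) (x # env) = sem e env"
  using sem_shift[of 0 env e x] by (simp add: lift_def)

definition lift2 :: "prexp \<Rightarrow> prexp" where "lift2 e = lift (lift e)"

lemma sem_lift2[simp]: "sem (lift2 e) (x # y # env) = sem e env"
  by (simp add: lift2_def)

definition e_let :: "prexp \<Rightarrow> prexp \<Rightarrow> prexp" where
  "e_let v b = IterE (NumE 1) v (lift b)"

lemma sem_let[simp]: "sem (e_let v b) env = sem b (sem v env # env)"
  by (simp add: e_let_def)

definition e_sum :: "prexp \<Rightarrow> prexp \<Rightarrow> prexp" where
  "e_sum m b = IterE m (NumE 0) (AddE (VarE 1) (shift 1 b))"

lemma sem_sum[simp]: "sem (e_sum m b) env = (\<Sum>i < sem m env. sem b (i # env))"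
proof -
  have "sem (shift 1 b) (k # r # env) = sem b (k # env)" for k r
    using sem_shift[of 1 "k # env" b r] by simp
  then have "iter n 0 (\<lambda>k r. sem (AddE (VarE 1) (shift 1 b)) (k # r # env)) = (\<Sum>i<n. sem b (i # env))"
    for n by (induct n) auto
  then show ?thesis by (simp add: e_sum_def)
qed

text \<open>An expression is read as true when its value is nonzero.\<close>

definition e_not :: "prexp \<Rightarrow> prexp" where "e_not a = SubE (NumE 1) a"
definition e_sg :: "prexp \<Rightarrow> prexp" where "e_sg a = e_not (e_not a)"
definition e_and :: "prexp \<Rightarrow> prexp \<Rightarrow> prexp" where "e_and a b = MulE (e_sg a) (e_sg b)"
definition e_or :: "prexp \<Rightarrow> prexp \<Rightarrow> prexp" where "e_or a b = e_sg (AddE a b)"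
definition e_imp :: "prexp \<Rightarrow> prexp \<Rightarrow> prexp" where "e_imp a b = e_or (e_not a) b"
definition e_eq :: "prexp \<Rightarrow> prexp \<Rightarrow> prexp" where "e_eq a b = e_not (AddE (SubE a b) (SubE b a))"
definition e_le :: "prexp \<Rightarrow> prexp \<Rightarrow> prexp" where "e_le a b = e_not (SubE a b)"
definition e_lt :: "prexp \<Rightarrow> prexp \<Rightarrow> prexp" where "e_lt a b = e_le (SucE a) b"
definition e_ex :: "prexp \<Rightarrow> prexp \<Rightarrow> prexp" where "e_ex n body = e_sg (e_sum n body)"
definition e_all :: "prexp \<Rightarrow> prexp \<Rightarrow> prexp" where "e_all n body = e_not (e_ex n (e_not body))"
definition e_if :: "prexp \<Rightarrow> prexp \<Rightarrow> prexp \<Rightarrow> prexp" where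
  "e_if c a b = AddE (MulE (e_sg c) a) (MulE (e_not c) b)"
definition e_max :: "prexp \<Rightarrow> prexp \<Rightarrow> prexp" where "e_max a b = e_if (e_le a b) b a"

lemma sem_not[simp]: "sem (e_not a) env = of_bool (sem a env = 0)"
  by (simp add: e_not_def)
lemma sem_sg[simp]: "sem (e_sg a) env = of_bool (sem a env \<noteq> 0)"
  by (simp add: e_sg_def)
lemma sem_and[simp]: "sem (e_and a b) env = of_bool (sem a env \<noteq> 0 \<and> sem b env \<noteq> 0)"
  by (simp add: e_and_def)
lemma sem_or[simp]: "sem (e_or a b) env = of_bool (sem a env \<noteq> 0 \<or> sem b env \<noteq> 0)"
  by (simp add: e_or_def)
lemma sem_imp[simp]: "sem (e_imp a b) env = of_bool (sem a env \<noteq> 0 \<longrightarrow> sem b env \<noteq> 0)"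
  by (simp add: e_imp_def)
lemma sem_eq[simp]: "sem (e_eq a b) env = of_bool (sem a env = sem b env)"
  by (simp add: e_eq_def)
lemma sem_le[simp]: "sem (e_le a b) env = of_bool (sem a env \<le> sem b env)"
  by (simp add: e_le_def)
lemma sem_lt[simp]: "sem (e_lt a b) env = of_bool (sem a env < sem b env)"
  by (simp add: e_lt_def)
lemma sem_ex[simp]: "sem (e_ex n body) env = of_bool (\<exists>i < sem n env. sem body (i # env) \<noteq> 0)"
  by (simp add: e_ex_def)
lemma sem_all[simp]: "sem (e_all n body) env = of_bool (\<forall>i < sem n env. sem body (i # env) \<noteq> 0)"
  by (simp add: e_all_def)
lemma sem_if[simp]: "sem (e_if c a b) env = (if sem c env \<noteq> 0 then sem a env else sem b env)"
  by (simp add: e_if_def)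
lemma sem_max[simp]: "sem (e_max a b) env = max (sem a env) (sem b env)"
  by (simp add: e_max_def max_def)

lemma of_bool_neq_0: "((of_bool P :: nat) \<noteq> 0) = P"
  by simp

lemma of_bool_eq_0: "((of_bool P :: nat) = 0) = (\<not> P)"
  by simp

definition pfst :: "nat \<Rightarrow> nat" where "pfst p = fst (prod_decode p)"
definition psnd :: "nat \<Rightarrow> nat" where "psnd p = snd (prod_decode p)"

lemma pfst_prod_encode[simp]: "pfst (prod_encode (a, b)) = a"
  by (simp add: pfst_def)
lemma psnd_prod_encode[simp]: "psnd (prod_encode (a, b)) = b"
  by (simp add: psnd_def)

lemma pfst_le: "pfst s \<le> s"
  by (metis le_prod_encode_1 pfst_def prod.collapse prod_decode_inverse)
lemma psnd_le: "psnd s \<le> s"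
  by (metis le_prod_encode_2 psnd_def prod.collapse prod_decode_inverse)

lemma sum_of_bool_eq_card: "(\<Sum>i<(n::nat). of_bool (P i) :: nat) = card {i. i < n \<and> P i}"
  by (simp add: Int_def lessThan_def)

lemma triangle_mono: "a \<le> b \<Longrightarrow> triangle a \<le> triangle b"
  by (induct b) (auto simp: le_Suc_eq)

lemma triangle_ge: "n \<le> triangle n"
  by (induct n) auto

lemma triangle_Suc_le_prod_encode_iff: "triangle (Suc i) \<le> prod_encode (a, b) \<longleftrightarrow> i < a + b"
proof
  assume "i < a + b"
  then show "triangle (Suc i) \<le> prod_encode (a, b)"
    using triangle_mono[of "Suc i" "a + b"] by (simp add: prod_encode_def)
next
  assume le: "triangle (Suc i) \<le> prod_encode (a, b)"
  show "i < a + b"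
  proof (rule ccontr)
    assume "\<not> i < a + b"
    then have "triangle (Suc (a + b)) \<le> triangle (Suc i)" by (intro triangle_mono) simp
    then show False using le by (simp add: prod_encode_def)
  qed
qed

definition e_triangle :: "prexp \<Rightarrow> prexp" where "e_triangle n = e_sum (SucE n) (VarE 0)"

lemma sem_triangle[simp]: "sem (e_triangle n) env = triangle (sem n env)"
proof -
  have "(\<Sum>i<Suc n. i) = triangle n" for n by (induct n) auto
  then show ?thesis by (simp del: sum.lessThan_Suc add: e_triangle_def)
qed

definition e_pair :: "prexp \<Rightarrow> prexp \<Rightarrow> prexp" where
  "e_pair a b = AddE (e_triangle (AddE a b)) a"

lemma sem_pair[simp]: "sem (e_pair a b) env = prod_encode (sem a env, sem b env)"
  by (simp add: e_pair_def prod_encode_def)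

text \<open>Decoding \<open>p = triangle (a + b) + a\<close> first recovers \<open>a + b\<close> as the number of
  \<open>i\<close> with \<open>triangle (Suc i) \<le> p\<close>.\<close>

definition e_pair_sum :: "prexp \<Rightarrow> prexp" where
  "e_pair_sum p = e_sum p (e_le (e_triangle (SucE (VarE 0))) (lift p))"

definition e_fst :: "prexp \<Rightarrow> prexp" where
  "e_fst p = e_let (e_pair_sum p) (SubE (lift p) (e_triangle (VarE 0)))"

definition e_snd :: "prexp \<Rightarrow> prexp" where
  "e_snd p = e_let (e_pair_sum p) (SubE (VarE 0) (SubE (lift p) (e_triangle (VarE 0))))"

lemma sem_pair_sum:
  assumes "sem p env = prod_encode (a, b)"
  shows "sem (e_pair_sum p) env = a + b"
proof -
  have "i < prod_encode (a, b)" if "i < a + b" for i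
    using that triangle_ge[of "a + b"] by (simp add: prod_encode_def)
  then have "{i. i < prod_encode (a, b) \<and> triangle (Suc i) \<le> prod_encode (a, b)} = {..<a + b}"
    by (auto simp del: triangle_Suc simp: triangle_Suc_le_prod_encode_iff)
  then show ?thesis by (simp add: e_pair_sum_def assms sum_of_bool_eq_card)
qed

lemma sem_fst[simp]: "sem (e_fst p) env = pfst (sem p env)"
proof -
  obtain a b where p: "sem p env = prod_encode (a, b)" by (metis prod_decode_inverse prod.collapse)
  have "sem (e_fst p) env = prod_encode (a, b) - triangle (a + b)"
    by (simp add: e_fst_def p sem_pair_sum[OF p])
  also have "\<dots> = a" by (simp add: prod_encode_def)
  finally show ?thesis by (simp add: p)
qed

lemma sem_snd[simp]: "sem (e_snd p) env = psnd (sem p env)"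
proof -
  obtain a b where p: "sem p env = prod_encode (a, b)" by (metis prod_decode_inverse prod.collapse)
  have "sem (e_snd p) env = a + b - (prod_encode (a, b) - triangle (a + b))"
    by (simp add: e_snd_def p sem_pair_sum[OF p])
  also have "\<dots> = b" by (simp add: prod_encode_def)
  finally show ?thesis by (simp add: p)
qed

text \<open>A nonempty list is coded as \<open>Suc\<close> of the pair of its head and (the code of) its tail.\<close>

definition hdc :: "nat \<Rightarrow> nat" where "hdc l = pfst (l - 1)"
definition tlc :: "nat \<Rightarrow> nat" where "tlc l = psnd (l - 1)"
definition nthc :: "nat \<Rightarrow> nat \<Rightarrow> nat" where "nthc l k = hdc ((tlc ^^ k) l)"
definition lenc :: "nat \<Rightarrow> nat" where "lenc l = length (list_decode l)"
definition consc :: "nat \<Rightarrow> nat \<Rightarrow> nat" where "consc a l = Suc (prod_encode (a, l))"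

lemma hdc_Suc_prod_encode[simp]: "hdc (Suc (prod_encode (a, b))) = a"
  by (simp add: hdc_def)
lemma tlc_Suc_prod_encode[simp]: "tlc (Suc (prod_encode (a, b))) = b"
  by (simp add: tlc_def)
lemma hdc_list_encode[simp]: "hdc (list_encode (x # xs)) = x"
  by (simp add: hdc_def)
lemma tlc_list_encode[simp]: "tlc (list_encode (x # xs)) = list_encode xs"
  by (simp add: tlc_def)
lemma lenc_list_encode[simp]: "lenc (list_encode xs) = length xs"
  by (simp add: lenc_def)
lemma consc_list_encode[simp]: "consc a (list_encode xs) = list_encode (a # xs)"
  by (simp add: consc_def)

lemma list_decode_consc[simp]: "list_decode (consc a l) = a # list_decode l"
  by (metis consc_list_encode list_decode_inverse list_encode_inverse)

lemma list_decode_nonzero: "l \<noteq> 0 \<Longrightarrow> list_decode l = hdc l # list_decode (tlc l)"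
  by (metis hdc_list_encode list.exhaust list_decode_inverse list_encode.simps(1) tlc_list_encode
      list_encode_inverse)

lemma funpow_tlc_list_encode: "(tlc ^^ k) (list_encode xs) = list_encode (drop k xs)"
proof (induct k arbitrary: xs)
  case (Suc k)
  show ?case
  proof (cases xs)
    case Nil
    have "tlc 0 = 0" by (simp add: tlc_def psnd_def prod_decode_def prod_decode_aux.simps)
    then have "(tlc ^^ k) 0 = 0" by (induct k) auto
    then show ?thesis using Nil \<open>tlc 0 = 0\<close> by (simp add: funpow_swap1)
  next
    case (Cons y ys)
    then show ?thesis using Suc by (simp del: funpow.simps add: funpow_Suc_right)
  qed
qed simp

lemma nthc_list_encode[simp]: "k < length xs \<Longrightarrow> nthc (list_encode xs) k = xs ! k"
  by (simp add: nthc_def funpow_tlc_list_encode Cons_nth_drop_Suc[symmetric])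

lemma mem_le_list_encode: "x \<in> set l \<Longrightarrow> x \<le> list_encode l"
proof (induct l)
  case (Cons a l)
  then show ?case using le_prod_encode_1[of a "list_encode l"] le_prod_encode_2[of "list_encode l" a]
    by auto
qed simp

lemma length_le_list_encode: "length xs \<le> list_encode xs"
proof (induct xs)
  case (Cons x xs)
  then show ?case using le_prod_encode_2[of "list_encode xs" x] by simp
qed simp

lemma nthc_le: "i < lenc l \<Longrightarrow> nthc l i \<le> l"
  by (metis lenc_def list_decode_inverse mem_le_list_encode nth_mem nthc_list_encode)

definition e_hd :: "prexp \<Rightarrow> prexp" where "e_hd l = e_fst (SubE l (NumE 1))"
definition e_tl :: "prexp \<Rightarrow> prexp" where "e_tl l = e_snd (SubE l (NumE 1))"
definition e_tl_pow :: "prexp \<Rightarrow> prexp \<Rightarrow> prexp" where "e_tl_pow l k = IterE k l (e_tl (VarE 1))"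
definition e_nth :: "prexp \<Rightarrow> prexp \<Rightarrow> prexp" where "e_nth l k = e_hd (e_tl_pow l k)"
definition e_len :: "prexp \<Rightarrow> prexp" where "e_len l = e_sum l (e_sg (e_tl_pow (lift l) (VarE 0)))"
definition e_cons :: "prexp \<Rightarrow> prexp \<Rightarrow> prexp" where "e_cons a l = SucE (e_pair a l)"

lemma sem_hd[simp]: "sem (e_hd l) env = hdc (sem l env)"
  by (simp add: e_hd_def hdc_def)
lemma sem_tl[simp]: "sem (e_tl l) env = tlc (sem l env)"
  by (simp add: e_tl_def tlc_def)
lemma sem_tl_pow[simp]: "sem (e_tl_pow l k) env = (tlc ^^ sem k env) (sem l env)"
  by (simp add: e_tl_pow_def iter_funpow)
lemma sem_nth[simp]: "sem (e_nth l k) env = nthc (sem l env) (sem k env)"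
  by (simp add: e_nth_def nthc_def)
lemma sem_cons[simp]: "sem (e_cons a l) env = consc (sem a env) (sem l env)"
  by (simp add: e_cons_def consc_def)

text \<open>The length of a coded list \<open>l\<close> counts the \<open>i < l\<close> with a nonempty \<open>i\<close>-th tail.\<close>

lemma sem_len[simp]: "sem (e_len l) env = lenc (sem l env)"
proof -
  obtain xs where xs: "sem l env = list_encode xs" by (metis list_decode_inverse)
  have "{i. i < list_encode xs \<and> list_encode (drop i xs) \<noteq> 0} = {..<length xs}"
    using length_le_list_encode[of xs] by (auto simp: list_encode_eq[of _ "[]", simplified])
  then show ?thesis by (simp add: e_len_def xs funpow_tlc_list_encode sum_of_bool_eq_card)
qed


section \<open>A universal enumeration of c.e. relations\<close>

text \<open>A halting computation is certified by a trace: a list of entries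
  \<open>entry f xs z\<close> (the program coded \<open>f\<close> maps the coded argument list \<open>xs\<close> to \<open>z\<close>),
  each justified by entries occurring earlier in the list.\<close>

fun recf_code :: "recf \<Rightarrow> nat" where
  "recf_code Zero = prod_encode (0, 0)"
| "recf_code Succ = prod_encode (1, 0)"
| "recf_code (Proj i) = prod_encode (2, i)"
| "recf_code (Comp f gs) = prod_encode (3, prod_encode (recf_code f, list_encode (map recf_code gs)))"
| "recf_code (Prec f g) = prod_encode (4, prod_encode (recf_code f, recf_code g))"
| "recf_code (Mu f) = prod_encode (5, recf_code f)"

definition entry :: "nat \<Rightarrow> nat \<Rightarrow> nat \<Rightarrow> nat" where
  "entry f xs z = prod_encode (f, prod_encode (xs, z))"

definition prog_of :: "nat \<Rightarrow> nat" where "prog_of E = pfst E"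
definition args_of :: "nat \<Rightarrow> nat" where "args_of E = pfst (psnd E)"
definition val_of :: "nat \<Rightarrow> nat" where "val_of E = psnd (psnd E)"

lemma entry_simps[simp]:
  "prog_of (entry f xs z) = f" "args_of (entry f xs z) = xs" "val_of (entry f xs z) = z"
  by (simp_all add: prog_of_def args_of_def val_of_def entry_def)

definition justified_Zero :: "nat \<Rightarrow> bool" where
  "justified_Zero E \<longleftrightarrow> pfst (prog_of E) = 0 \<and> val_of E = 0"

definition justified_Succ :: "nat \<Rightarrow> bool" where
  "justified_Succ E \<longleftrightarrow> pfst (prog_of E) = 1 \<and> args_of E \<noteq> 0 \<and> val_of E = Suc (hdc (args_of E))"

definition justified_Proj :: "nat \<Rightarrow> bool" where
  "justified_Proj E \<longleftrightarrow> pfst (prog_of E) = 2 \<and> psnd (prog_of E) < lenc (args_of E) \<and>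
     val_of E = nthc (args_of E) (psnd (prog_of E))"

definition justified_Comp :: "nat set \<Rightarrow> nat \<Rightarrow> bool" where
  "justified_Comp S E \<longleftrightarrow> pfst (prog_of E) = 3 \<and>
     (\<exists>E'\<in>S. prog_of E' = pfst (psnd (prog_of E)) \<and> val_of E' = val_of E \<and>
        lenc (args_of E') = lenc (psnd (psnd (prog_of E))) \<and>
        (\<forall>k < lenc (psnd (psnd (prog_of E))). \<exists>E''\<in>S. prog_of E'' = nthc (psnd (psnd (prog_of E))) k \<and>
           args_of E'' = args_of E \<and> val_of E'' = nthc (args_of E') k))"

definition justified_Prec0 :: "nat set \<Rightarrow> nat \<Rightarrow> bool" where
  "justified_Prec0 S E \<longleftrightarrow> pfst (prog_of E) = 4 \<and> args_of E \<noteq> 0 \<and> hdc (args_of E) = 0 \<and>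
     (\<exists>E'\<in>S. prog_of E' = pfst (psnd (prog_of E)) \<and> args_of E' = tlc (args_of E) \<and> val_of E' = val_of E)"

definition justified_PrecS :: "nat set \<Rightarrow> nat \<Rightarrow> bool" where
  "justified_PrecS S E \<longleftrightarrow> pfst (prog_of E) = 4 \<and> args_of E \<noteq> 0 \<and> hdc (args_of E) \<noteq> 0 \<and>
     (\<exists>E'\<in>S. prog_of E' = prog_of E \<and> args_of E' = consc (hdc (args_of E) - 1) (tlc (args_of E)) \<and>
       (\<exists>E''\<in>S. prog_of E'' = psnd (psnd (prog_of E)) \<and>
          args_of E'' = consc (hdc (args_of E) - 1) (consc (val_of E') (tlc (args_of E))) \<and>
          val_of E'' = val_of E))"

definition justified_Mu :: "nat set \<Rightarrow> nat \<Rightarrow> bool" where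
  "justified_Mu S E \<longleftrightarrow> pfst (prog_of E) = 5 \<and>
     (\<exists>E'\<in>S. prog_of E' = psnd (prog_of E) \<and> args_of E' = consc (val_of E) (args_of E) \<and> val_of E' = 0) \<and>
     (\<forall>m < val_of E. \<exists>E'\<in>S. prog_of E' = psnd (prog_of E) \<and> args_of E' = consc m (args_of E) \<and> val_of E' \<noteq> 0)"

definition justified :: "nat set \<Rightarrow> nat \<Rightarrow> bool" where
  "justified S E \<longleftrightarrow> justified_Zero E \<or> justified_Succ E \<or> justified_Proj E \<or> justified_Comp S E \<or>
     justified_Prec0 S E \<or> justified_PrecS S E \<or> justified_Mu S E"

definition valid_trace :: "nat list \<Rightarrow> bool" where
  "valid_trace Ls \<longleftrightarrow> (\<forall>i < length Ls. justified (set (take i Ls)) (Ls ! i))"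

lemma justified_mono:
  assumes "S \<subseteq> S'" "justified S E"
  shows "justified S' E"
proof -
  have "justified_Comp S E \<Longrightarrow> justified_Comp S' E"
    using assms(1) unfolding justified_Comp_def by (meson subsetD)
  moreover have "justified_Prec0 S E \<Longrightarrow> justified_Prec0 S' E"
    using assms(1) unfolding justified_Prec0_def by (meson subsetD)
  moreover have "justified_PrecS S E \<Longrightarrow> justified_PrecS S' E"
    using assms(1) unfolding justified_PrecS_def by (meson subsetD)
  moreover have "justified_Mu S E \<Longrightarrow> justified_Mu S' E"
    using assms(1) unfolding justified_Mu_def by (meson subsetD)
  ultimately show ?thesis using assms(2) unfolding justified_def by blast
qed

definition sound_entries :: "nat set \<Rightarrow> bool" where
  "sound_entries S \<longleftrightarrow> (\<forall>E\<in>S. \<forall>f. prog_of E = recf_code f \<longrightarrow> eval f (list_decode (args_of E)) (val_of E))"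

lemma sound_entriesD:
  "sound_entries S \<Longrightarrow> E \<in> S \<Longrightarrow> prog_of E = recf_code f \<Longrightarrow> eval f (list_decode (args_of E)) (val_of E)"
  unfolding sound_entries_def by blast

lemma justified_Comp_sound:
  assumes "justified_Comp S E" "sound_entries S" "prog_of E = recf_code (Comp g gs)"
  shows "eval (Comp g gs) (list_decode (args_of E)) (val_of E)"
proof -
  obtain E' where E': "E' \<in> S" "prog_of E' = recf_code g" "val_of E' = val_of E"
    "lenc (args_of E') = length gs"
    "\<forall>k<length gs. \<exists>E''\<in>S. prog_of E'' = recf_code (gs ! k) \<and> args_of E'' = args_of E \<and>
       val_of E'' = nthc (args_of E') k"
    using assms(1,3) by (auto simp: justified_Comp_def)
  define ys where "ys = list_decode (args_of E')"
  have "list_all2 (\<lambda>g y. eval g (list_decode (args_of E)) y) gs ys"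
  proof (rule list_all2_all_nthI)
    show "length gs = length ys" using E'(4) by (simp add: ys_def lenc_def)
    fix k assume "k < length gs"
    then obtain E'' where "E'' \<in> S" "prog_of E'' = recf_code (gs ! k)" "args_of E'' = args_of E"
      "val_of E'' = nthc (args_of E') k" using E'(5) by blast
    moreover have "nthc (args_of E') k = ys ! k"
      using \<open>k < length gs\<close> E'(4) by (metis lenc_def list_decode_inverse nthc_list_encode ys_def)
    ultimately show "eval (gs ! k) (list_decode (args_of E)) (ys ! k)"
      using sound_entriesD[OF assms(2)] by metis
  qed
  moreover have "eval g ys (val_of E)"
    using sound_entriesD[OF assms(2) E'(1,2)] E'(3) by (simp add: ys_def)
  ultimately show ?thesis by (rule eval_Comp)
qed

lemma justified_Prec_sound:
  assumes "justified_Prec0 S E \<or> justified_PrecS S E" "sound_entries S"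
    "prog_of E = recf_code (Prec g h)"
  shows "eval (Prec g h) (list_decode (args_of E)) (val_of E)"
proof -
  have "args_of E \<noteq> 0" using assms(1) by (auto simp: justified_Prec0_def justified_PrecS_def)
  then obtain n rest where xs: "list_decode (args_of E) = n # rest" "hdc (args_of E) = n"
    "list_decode (tlc (args_of E)) = rest" using list_decode_nonzero by blast
  show ?thesis
  proof (cases n)
    case 0
    then obtain E' where "E' \<in> S" "prog_of E' = recf_code g" "args_of E' = tlc (args_of E)"
      "val_of E' = val_of E" using assms(1,3) xs(2) by (auto simp: justified_Prec0_def justified_PrecS_def)
    then have "eval g rest (val_of E)" using sound_entriesD[OF assms(2)] xs(3) by metis
    then show ?thesis using xs(1) 0 by (simp add: eval_Prec0)
  next
    case (Suc m)
    then obtain E' E'' where "E' \<in> S" "prog_of E' = recf_code (Prec g h)"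
      "args_of E' = consc m (tlc (args_of E))" "E'' \<in> S" "prog_of E'' = recf_code h"
      "args_of E'' = consc m (consc (val_of E') (tlc (args_of E)))" "val_of E'' = val_of E"
      using assms(1,3) xs(2) by (auto simp: justified_Prec0_def justified_PrecS_def)
    then have "eval (Prec g h) (m # rest) (val_of E')" "eval h (m # val_of E' # rest) (val_of E)"
      using sound_entriesD[OF assms(2)] xs(3) by (metis list_decode_consc)+
    then show ?thesis using xs(1) Suc by (simp add: eval_PrecS)
  qed
qed

lemma justified_Mu_sound:
  assumes "justified_Mu S E" "sound_entries S" "prog_of E = recf_code (Mu g)"
  shows "eval (Mu g) (list_decode (args_of E)) (val_of E)"
proof (rule eval_Mu)
  let ?xs = "list_decode (args_of E)"
  obtain E' where "E' \<in> S" "prog_of E' = recf_code g" "args_of E' = consc (val_of E) (args_of E)"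
    "val_of E' = 0" using assms(1,3) by (auto simp: justified_Mu_def)
  then show "eval g (val_of E # ?xs) 0" using sound_entriesD[OF assms(2)] by (metis list_decode_consc)
  show "\<forall>m<val_of E. \<exists>k. eval g (m # ?xs) (Suc k)"
  proof (intro allI impI)
    fix m assume "m < val_of E"
    then obtain E' where "E' \<in> S" "prog_of E' = recf_code g" "args_of E' = consc m (args_of E)"
      "val_of E' \<noteq> 0" using assms(1,3) by (auto simp: justified_Mu_def)
    then have "eval g (m # ?xs) (val_of E')" "val_of E' \<noteq> 0"
      using sound_entriesD[OF assms(2)] by (metis list_decode_consc)+
    then show "\<exists>k. eval g (m # ?xs) (Suc k)" by (metis not0_implies_Suc)
  qed
qed

lemmas justified_defs = justified_def justified_Zero_def justified_Succ_def justified_Proj_def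
  justified_Comp_def justified_Prec0_def justified_PrecS_def justified_Mu_def

lemma justified_sound:
  assumes "justified S E" "sound_entries S" "prog_of E = recf_code f"
  shows "eval f (list_decode (args_of E)) (val_of E)"
proof (cases f)
  case Zero
  then show ?thesis using assms(1,3) by (auto simp: justified_defs eval_Zero)
next
  case Succ
  then have "args_of E \<noteq> 0" "val_of E = Suc (hdc (args_of E))"
    using assms(1,3) by (auto simp: justified_defs)
  then show ?thesis using Succ by (auto simp: list_decode_nonzero intro: eval_Succ)
next
  case (Proj i)
  then have "i < lenc (args_of E)" "val_of E = nthc (args_of E) i"
    using assms(1,3) by (auto simp: justified_defs)
  then show ?thesis using Proj by (metis eval_ProjI lenc_def list_decode_inverse nthc_list_encode)
next
  case (Comp g gs)
  then have "justified_Comp S E" using assms(1,3) by (auto simp: justified_defs)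
  then show ?thesis using Comp assms(2,3) justified_Comp_sound by blast
next
  case (Prec g h)
  then have "justified_Prec0 S E \<or> justified_PrecS S E" using assms(1,3) by (auto simp: justified_defs)
  then show ?thesis using Prec assms(2,3) justified_Prec_sound by blast
next
  case (Mu g)
  then have "justified_Mu S E" using assms(1,3) by (auto simp: justified_defs)
  then show ?thesis using Mu assms(2,3) justified_Mu_sound by blast
qed

lemma valid_trace_sound:
  assumes "valid_trace Ls" "i < length Ls" "prog_of (Ls ! i) = recf_code f"
  shows "eval f (list_decode (args_of (Ls ! i))) (val_of (Ls ! i))"
  using assms(2,3)
proof (induct i arbitrary: f rule: less_induct)
  case (less i)
  have "sound_entries (set (take i Ls))"
    unfolding sound_entries_def using less by (auto simp: in_set_conv_nth)
  then show ?case using justified_sound assms(1) less(2,3) unfolding valid_trace_def by blast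
qed

lemma valid_trace_Nil: "valid_trace []"
  by (simp add: valid_trace_def)

lemma valid_trace_append: "valid_trace A \<Longrightarrow> valid_trace B \<Longrightarrow> valid_trace (A @ B)"
  unfolding valid_trace_def
proof (intro allI impI)
  fix i assume A: "\<forall>i<length A. justified (set (take i A)) (A ! i)"
    and B: "\<forall>i<length B. justified (set (take i B)) (B ! i)" and i: "i < length (A @ B)"
  show "justified (set (take i (A @ B))) ((A @ B) ! i)"
  proof (cases "i < length A")
    case True then show ?thesis using A by (simp add: nth_append)
  next
    case False
    then have "justified (set (take (i - length A) B)) ((A @ B) ! i)" using B i by (simp add: nth_append)
    moreover have "set (take (i - length A) B) \<subseteq> set (take i (A @ B))" using False by auto
    ultimately show ?thesis by (blast intro: justified_mono)
  qed
qed

lemma valid_trace_snoc: "valid_trace A \<Longrightarrow> justified (set A) E \<Longrightarrow> valid_trace (A @ [E])"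
  unfolding valid_trace_def by (auto simp: nth_append less_Suc_eq)

lemma valid_trace_collect:
  assumes "\<And>k. k < (n::nat) \<Longrightarrow> \<exists>Ls. valid_trace Ls \<and> e k \<in> set Ls"
  shows "\<exists>Ls. valid_trace Ls \<and> (\<forall>k<n. e k \<in> set Ls)"
  using assms
proof (induct n)
  case 0 then show ?case using valid_trace_Nil by blast
next
  case (Suc n)
  obtain A where A: "valid_trace A" "\<forall>k<n. e k \<in> set A" using Suc by (meson less_SucI)
  obtain B where B: "valid_trace B" "e n \<in> set B" using Suc.prems by blast
  have "\<forall>k<Suc n. e k \<in> set (A @ B)" using A(2) B(2) by (auto simp: less_Suc_eq)
  then show ?case using valid_trace_append[OF A(1) B(1)] by blast
qed

lemma valid_trace_extend:
  assumes "valid_trace A" "valid_trace B" "justified (set (A @ B)) E"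
  shows "\<exists>Ls. valid_trace Ls \<and> E \<in> set Ls"
  using valid_trace_snoc[OF valid_trace_append[OF assms(1,2)] assms(3)] by auto

lemma justified_Comp_entryI:
  assumes "\<forall>k<length gs. entry (recf_code (gs ! k)) (list_encode xs) (ys ! k) \<in> S"
    "entry (recf_code f) (list_encode ys) z \<in> S" "length gs = length ys"
  shows "justified_Comp S (entry (recf_code (Comp f gs)) (list_encode xs) z)"
proof -
  have "\<exists>E''\<in>S. prog_of E'' = recf_code (gs ! k) \<and> args_of E'' = list_encode xs \<and> val_of E'' = ys ! k"
    if "k < length gs" for k
    using assms(1) that by (intro bexI[of _ "entry (recf_code (gs ! k)) (list_encode xs) (ys ! k)"]) auto
  then show ?thesis
    unfolding justified_Comp_def
    using assms(2,3) by (auto intro: bexI[of _ "entry (recf_code f) (list_encode ys) z"])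
qed

lemma justified_Prec0_entryI:
  assumes "entry (recf_code f) (list_encode xs) y \<in> S"
  shows "justified_Prec0 S (entry (recf_code (Prec f g)) (list_encode (0 # xs)) y)"
  unfolding justified_Prec0_def
  using assms by (auto intro: bexI[of _ "entry (recf_code f) (list_encode xs) y"])

lemma justified_PrecS_entryI:
  assumes "entry (recf_code (Prec f g)) (list_encode (n # xs)) y \<in> S"
    "entry (recf_code g) (list_encode (n # y # xs)) z \<in> S"
  shows "justified_PrecS S (entry (recf_code (Prec f g)) (list_encode (Suc n # xs)) z)"
proof -
  have "\<exists>E''\<in>S. prog_of E'' = recf_code g \<and> args_of E'' = list_encode (n # y # xs) \<and> val_of E'' = z"
    by (rule bexI[OF _ assms(2)]) simp
  moreover have "0 < list_encode (Suc n # xs)" by simp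
  ultimately show ?thesis
    unfolding justified_PrecS_def
    by (simp del: list_encode.simps) (rule bexI[OF _ assms(1)], simp del: list_encode.simps)
qed

lemma justified_Mu_entryI:
  assumes "entry (recf_code f) (list_encode (n # xs)) 0 \<in> S"
    "\<forall>m<n. entry (recf_code f) (list_encode (m # xs)) (Suc (K m)) \<in> S"
  shows "justified_Mu S (entry (recf_code (Mu f)) (list_encode xs) n)"
proof -
  have "\<exists>E'\<in>S. prog_of E' = recf_code f \<and> args_of E' = list_encode (n # xs) \<and> val_of E' = 0"
    using assms(1) by (intro bexI[of _ "entry (recf_code f) (list_encode (n # xs)) 0"]) simp_all
  moreover have "\<exists>E'\<in>S. prog_of E' = recf_code f \<and> args_of E' = list_encode (m # xs) \<and> val_of E' \<noteq> 0"
    if "m < n" for m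
    using assms(2) that by (intro bexI[of _ "entry (recf_code f) (list_encode (m # xs)) (Suc (K m))"]) simp_all
  ultimately show ?thesis unfolding justified_Mu_def by (simp del: list_encode.simps)
qed

lemma valid_trace_complete:
  "eval f xs z \<Longrightarrow> \<exists>Ls. valid_trace Ls \<and> entry (recf_code f) (list_encode xs) z \<in> set Ls"
proof (induct rule: eval.induct)
  case (eval_Zero xs)
  show ?case using valid_trace_extend[OF valid_trace_Nil valid_trace_Nil]
    by (simp add: justified_def justified_Zero_def)
next
  case (eval_Succ x xs)
  show ?case using valid_trace_extend[OF valid_trace_Nil valid_trace_Nil]
    by (simp add: justified_def justified_Succ_def)
next
  case (eval_Proj i xs)
  then show ?case using valid_trace_extend[OF valid_trace_Nil valid_trace_Nil]
    by (simp add: justified_def justified_Proj_def)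
next
  case (eval_Comp xs gs ys f z)
  have "\<exists>Ls. valid_trace Ls \<and> entry (recf_code (gs ! k)) (list_encode xs) (ys ! k) \<in> set Ls"
    if "k < length gs" for k using eval_Comp(1) that by (auto dest: list_all2_nthD)
  then obtain A where A: "valid_trace A"
    "\<forall>k<length gs. entry (recf_code (gs ! k)) (list_encode xs) (ys ! k) \<in> set A"
    using valid_trace_collect[of "length gs" "\<lambda>k. entry (recf_code (gs ! k)) (list_encode xs) (ys ! k)"]
    by blast
  obtain B where B: "valid_trace B" "entry (recf_code f) (list_encode ys) z \<in> set B"
    using eval_Comp(3) by blast
  have "justified_Comp (set (A @ B)) (entry (recf_code (Comp f gs)) (list_encode xs) z)"
    using A(2) B(2) eval_Comp(1) by (intro justified_Comp_entryI) (auto dest: list_all2_lengthD)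
  then show ?case using valid_trace_extend[OF A(1) B(1)] by (simp add: justified_def)
next
  case (eval_Prec0 f xs y g)
  then obtain A where A: "valid_trace A" "entry (recf_code f) (list_encode xs) y \<in> set A" by blast
  then have "justified_Prec0 (set (A @ [])) (entry (recf_code (Prec f g)) (list_encode (0 # xs)) y)"
    by (intro justified_Prec0_entryI) simp
  then show ?case using valid_trace_extend[OF A(1) valid_trace_Nil] by (simp add: justified_def)
next
  case (eval_PrecS f g n xs y z)
  then obtain A B where A: "valid_trace A" "entry (recf_code (Prec f g)) (list_encode (n # xs)) y \<in> set A"
    and B: "valid_trace B" "entry (recf_code g) (list_encode (n # y # xs)) z \<in> set B" by blast
  then have "justified_PrecS (set (A @ B)) (entry (recf_code (Prec f g)) (list_encode (Suc n # xs)) z)"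
    by (intro justified_PrecS_entryI[where y = y]) simp_all
  then show ?case using valid_trace_extend[OF A(1) B(1)] by (simp add: justified_def)
next
  case (eval_Mu f n xs)
  obtain A where A: "valid_trace A" "entry (recf_code f) (list_encode (n # xs)) 0 \<in> set A"
    using eval_Mu(2) by blast
  have "\<forall>m<n. \<exists>k Ls. valid_trace Ls \<and> entry (recf_code f) (list_encode (m # xs)) (Suc k) \<in> set Ls"
    using eval_Mu(3) by blast
  then obtain K where "\<forall>m<n. \<exists>Ls. valid_trace Ls \<and> entry (recf_code f) (list_encode (m # xs)) (Suc (K m)) \<in> set Ls"
    by metis
  then obtain B where B: "valid_trace B"
    "\<forall>m<n. entry (recf_code f) (list_encode (m # xs)) (Suc (K m)) \<in> set B"
    using valid_trace_collect[of n "\<lambda>m. entry (recf_code f) (list_encode (m # xs)) (Suc (K m))"] by blast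
  have "justified_Mu (set (A @ B)) (entry (recf_code (Mu f)) (list_encode xs) n)"
    using A(2) B(2) by (intro justified_Mu_entryI[where K = K]) simp_all
  then show ?case using valid_trace_extend[OF A(1) B(1)] by (simp add: justified_def)
qed

definition e_prog_of :: "prexp \<Rightarrow> prexp" where "e_prog_of E = e_fst E"
definition e_args_of :: "prexp \<Rightarrow> prexp" where "e_args_of E = e_fst (e_snd E)"
definition e_val_of :: "prexp \<Rightarrow> prexp" where "e_val_of E = e_snd (e_snd E)"

lemma sem_prog_of[simp]: "sem (e_prog_of E) env = prog_of (sem E env)"
  by (simp add: e_prog_of_def prog_of_def)
lemma sem_args_of[simp]: "sem (e_args_of E) env = args_of (sem E env)"
  by (simp add: e_args_of_def args_of_def)
lemma sem_val_of[simp]: "sem (e_val_of E) env = val_of (sem E env)"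
  by (simp add: e_val_of_def val_of_def)

text \<open>The binders below take the list \<open>os\<close> of expressions in scope, starting with the trace,
  the number of earlier entries and the current entry; they lift all of them when entering
  the body, which receives the lifted list and the newly bound expression.\<close>

definition e_ex_earlier :: "prexp list \<Rightarrow> (prexp list \<Rightarrow> prexp \<Rightarrow> prexp) \<Rightarrow> prexp" where
  "e_ex_earlier os P = e_ex (os ! 1) (P (map lift os) (e_nth (lift (os ! 0)) (VarE 0)))"

definition e_all_below :: "prexp list \<Rightarrow> prexp \<Rightarrow> (prexp list \<Rightarrow> prexp \<Rightarrow> prexp) \<Rightarrow> prexp" where
  "e_all_below os n P = e_all n (P (map lift os) (VarE 0))"

lemma sem_ex_earlier: "length os > 1 \<Longrightarrow> sem (e_ex_earlier os P) env =
   of_bool (\<exists>j < sem (os ! 1) env. sem (P (map lift os) (e_nth (lift (os ! 0)) (VarE 0))) (j # env) \<noteq> 0)"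
  by (simp add: e_ex_earlier_def)

lemma sem_all_below: "sem (e_all_below os n P) env =
   of_bool (\<forall>k < sem n env. sem (P (map lift os) (VarE 0)) (k # env) \<noteq> 0)"
  by (simp add: e_all_below_def)

definition e_justified_Zero :: "prexp \<Rightarrow> prexp" where
  "e_justified_Zero E = e_and (e_eq (e_fst (e_prog_of E)) (NumE 0)) (e_eq (e_val_of E) (NumE 0))"

definition e_justified_Succ :: "prexp \<Rightarrow> prexp" where
  "e_justified_Succ E = e_and (e_eq (e_fst (e_prog_of E)) (NumE 1))
     (e_and (e_not (e_eq (e_args_of E) (NumE 0))) (e_eq (e_val_of E) (SucE (e_hd (e_args_of E)))))"

definition e_justified_Proj :: "prexp \<Rightarrow> prexp" where
  "e_justified_Proj E = e_and (e_eq (e_fst (e_prog_of E)) (NumE 2))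
     (e_and (e_lt (e_snd (e_prog_of E)) (e_len (e_args_of E)))
       (e_eq (e_val_of E) (e_nth (e_args_of E) (e_snd (e_prog_of E)))))"

definition e_justified_Comp :: "prexp list \<Rightarrow> prexp" where
  "e_justified_Comp os = e_and (e_eq (e_fst (e_prog_of (os!2))) (NumE 3))
     (e_ex_earlier os (\<lambda>os E'. e_and (e_eq (e_prog_of E') (e_fst (e_snd (e_prog_of (os!2)))))
        (e_and (e_eq (e_val_of E') (e_val_of (os!2)))
        (e_and (e_eq (e_len (e_args_of E')) (e_len (e_snd (e_snd (e_prog_of (os!2))))))
          (e_all_below (os @ [E']) (e_len (e_snd (e_snd (e_prog_of (os!2)))))
            (\<lambda>os k. e_ex_earlier (os @ [k]) (\<lambda>os E''.
              e_and (e_eq (e_prog_of E'') (e_nth (e_snd (e_snd (e_prog_of (os!2)))) (os!4)))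
                (e_and (e_eq (e_args_of E'') (e_args_of (os!2)))
                  (e_eq (e_val_of E'') (e_nth (e_args_of (os!3)) (os!4)))))))))))"

definition e_justified_Prec0 :: "prexp list \<Rightarrow> prexp" where
  "e_justified_Prec0 os = e_and (e_eq (e_fst (e_prog_of (os!2))) (NumE 4))
     (e_and (e_not (e_eq (e_args_of (os!2)) (NumE 0))) (e_and (e_eq (e_hd (e_args_of (os!2))) (NumE 0))
     (e_ex_earlier os (\<lambda>os E'. e_and (e_eq (e_prog_of E') (e_fst (e_snd (e_prog_of (os!2)))))
       (e_and (e_eq (e_args_of E') (e_tl (e_args_of (os!2)))) (e_eq (e_val_of E') (e_val_of (os!2))))))))"

definition e_justified_PrecS :: "prexp list \<Rightarrow> prexp" where
  "e_justified_PrecS os = e_and (e_eq (e_fst (e_prog_of (os!2))) (NumE 4))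
     (e_and (e_not (e_eq (e_args_of (os!2)) (NumE 0))) (e_and (e_not (e_eq (e_hd (e_args_of (os!2))) (NumE 0)))
     (e_ex_earlier os (\<lambda>os E'. e_and (e_eq (e_prog_of E') (e_prog_of (os!2)))
       (e_and (e_eq (e_args_of E') (e_cons (SubE (e_hd (e_args_of (os!2))) (NumE 1)) (e_tl (e_args_of (os!2)))))
        (e_ex_earlier (os @ [E']) (\<lambda>os E''. e_and (e_eq (e_prog_of E'') (e_snd (e_snd (e_prog_of (os!2)))))
           (e_and (e_eq (e_args_of E'')
              (e_cons (SubE (e_hd (e_args_of (os!2))) (NumE 1)) (e_cons (e_val_of (os!3)) (e_tl (e_args_of (os!2))))))
             (e_eq (e_val_of E'') (e_val_of (os!2)))))))))))"

definition e_justified_Mu :: "prexp list \<Rightarrow> prexp" where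
  "e_justified_Mu os = e_and (e_eq (e_fst (e_prog_of (os!2))) (NumE 5))
     (e_and (e_ex_earlier os (\<lambda>os E'. e_and (e_eq (e_prog_of E') (e_snd (e_prog_of (os!2))))
         (e_and (e_eq (e_args_of E') (e_cons (e_val_of (os!2)) (e_args_of (os!2)))) (e_eq (e_val_of E') (NumE 0)))))
       (e_all_below os (e_val_of (os!2)) (\<lambda>os m. e_ex_earlier (os @ [m]) (\<lambda>os E'.
          e_and (e_eq (e_prog_of E') (e_snd (e_prog_of (os!2))))
           (e_and (e_eq (e_args_of E') (e_cons (os!3) (e_args_of (os!2)))) (e_not (e_eq (e_val_of E') (NumE 0))))))))"

definition e_justified :: "prexp list \<Rightarrow> prexp" where
  "e_justified os = e_or (e_justified_Zero (os!2)) (e_or (e_justified_Succ (os!2))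
     (e_or (e_justified_Proj (os!2)) (e_or (e_justified_Comp os) (e_or (e_justified_Prec0 os)
       (e_or (e_justified_PrecS os) (e_justified_Mu os))))))"

lemma sem_justified_Zero: "sem (e_justified_Zero E) env = of_bool (justified_Zero (sem E env))"
  by (simp add: e_justified_Zero_def justified_Zero_def)

lemma sem_justified_Succ: "sem (e_justified_Succ E) env = of_bool (justified_Succ (sem E env))"
  by (simp add: e_justified_Succ_def justified_Succ_def)

lemma sem_justified_Proj: "sem (e_justified_Proj E) env = of_bool (justified_Proj (sem E env))"
  by (simp add: e_justified_Proj_def justified_Proj_def)

lemmas sem_justified_simps = sem_and sem_eq sem_or sem_not sem_lt sem_le sem.simps(1,2,3,5)
  sem_prog_of sem_args_of sem_val_of sem_fst sem_snd sem_lift sem_nth sem_len sem_hd sem_tl sem_cons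
  sem_ex_earlier sem_all_below of_bool_neq_0 list.map nth_Cons_0 nth_Cons_Suc
  eval_nat_numeral append_Cons append_Nil length_Cons length_map

context
  fixes L I E :: prexp and env :: "nat list"
begin

lemma sem_justified_Comp: "sem (e_justified_Comp [L, I, E]) env =
    of_bool (justified_Comp (nthc (sem L env) ` {..<sem I env}) (sem E env))"
  by (simp only: e_justified_Comp_def sem_justified_simps) (simp add: justified_Comp_def Ball_def Bex_def)

lemma sem_justified_Prec0: "sem (e_justified_Prec0 [L, I, E]) env =
    of_bool (justified_Prec0 (nthc (sem L env) ` {..<sem I env}) (sem E env))"
  by (simp only: e_justified_Prec0_def sem_justified_simps) (simp add: justified_Prec0_def Ball_def Bex_def)

lemma sem_justified_PrecS: "sem (e_justified_PrecS [L, I, E]) env =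
    of_bool (justified_PrecS (nthc (sem L env) ` {..<sem I env}) (sem E env))"
  by (simp only: e_justified_PrecS_def sem_justified_simps) (simp add: justified_PrecS_def Ball_def Bex_def)

lemma sem_justified_Mu: "sem (e_justified_Mu [L, I, E]) env =
    of_bool (justified_Mu (nthc (sem L env) ` {..<sem I env}) (sem E env))"
  by (simp only: e_justified_Mu_def sem_justified_simps) (simp add: justified_Mu_def Ball_def Bex_def)

lemma sem_justified: "sem (e_justified [L, I, E]) env =
    of_bool (justified (nthc (sem L env) ` {..<sem I env}) (sem E env))"
  unfolding e_justified_def numeral_2_eq_2 nth_Cons_Suc nth_Cons_0 sem_or sem_justified_Zero
    sem_justified_Succ sem_justified_Proj sem_justified_Comp sem_justified_Prec0 sem_justified_PrecS
    sem_justified_Mu of_bool_neq_0 justified_def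
  by (rule refl)

end

definition valid_trace_code :: "nat \<Rightarrow> bool" where
  "valid_trace_code Lc \<longleftrightarrow> (\<forall>i < lenc Lc. justified (nthc Lc ` {..<i}) (nthc Lc i))"

definition e_valid_trace :: "prexp \<Rightarrow> prexp" where
  "e_valid_trace L = e_all (e_len L) (e_justified [lift L, VarE 0, e_nth (lift L) (VarE 0)])"

lemma sem_valid_trace[simp]: "sem (e_valid_trace L) env = of_bool (valid_trace_code (sem L env))"
  by (simp add: e_valid_trace_def valid_trace_code_def sem_justified)

lemma valid_trace_code_iff: "valid_trace_code (list_encode Ls) \<longleftrightarrow> valid_trace Ls"
proof -
  have "nthc (list_encode Ls) ` {..<i} = set (take i Ls)" if "i < length Ls" for i
    using that by (force simp: in_set_conv_nth image_iff)
  then show ?thesis unfolding valid_trace_code_def valid_trace_def by simp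
qed

definition halts_within :: "nat \<Rightarrow> nat \<Rightarrow> nat \<Rightarrow> nat \<Rightarrow> bool" where
  "halts_within e t a b \<longleftrightarrow> (\<exists>Lc<Suc t. valid_trace_code Lc \<and>
     (\<exists>i<lenc Lc. prog_of (nthc Lc i) = e \<and> args_of (nthc Lc i) = list_encode [a, b]))"

definition e_halts_within :: "prexp \<Rightarrow> prexp \<Rightarrow> prexp \<Rightarrow> prexp \<Rightarrow> prexp" where
  "e_halts_within e t a b = e_ex (SucE t) (e_and (e_valid_trace (VarE 0)) (e_ex (e_len (VarE 0))
     (e_and (e_eq (e_prog_of (e_nth (VarE 1) (VarE 0))) (lift2 e))
       (e_eq (e_args_of (e_nth (VarE 1) (VarE 0))) (lift2 (e_cons a (e_cons b (NumE 0))))))))"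

lemma sem_halts_within[simp]: "sem (e_halts_within e t a b) env =
    of_bool (halts_within (sem e env) (sem t env) (sem a env) (sem b env))"
proof -
  have "consc (sem a env) (consc (sem b env) 0) = list_encode [sem a env, sem b env]"
    using consc_list_encode[of _ "[]"] consc_list_encode[of _ "[sem b env]"] by simp
  then show ?thesis by (simp add: e_halts_within_def halts_within_def)
qed

lemma halts_within_mono: "halts_within e t a b \<Longrightarrow> t \<le> t' \<Longrightarrow> halts_within e t' a b"
  unfolding halts_within_def by (metis le_imp_less_Suc less_Suc_eq_le order.trans)

lemma halts_within_iff_eval: "(\<exists>t. halts_within (recf_code g) t a b) \<longleftrightarrow> (\<exists>z. eval g [a, b] z)"
proof
  assume "\<exists>t. halts_within (recf_code g) t a b"
  then obtain Ls i where "valid_trace Ls" "i < length Ls" "prog_of (Ls ! i) = recf_code g"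
    "args_of (Ls ! i) = list_encode [a, b]"
    unfolding halts_within_def by (metis lenc_list_encode list_decode_inverse nthc_list_encode
        valid_trace_code_iff)
  then show "\<exists>z. eval g [a, b] z" using valid_trace_sound by fastforce
next
  assume "\<exists>z. eval g [a, b] z"
  then obtain z Ls where Ls: "valid_trace Ls" "entry (recf_code g) (list_encode [a, b]) z \<in> set Ls"
    using valid_trace_complete by blast
  then obtain i where "i < length Ls" "Ls ! i = entry (recf_code g) (list_encode [a, b]) z"
    by (auto simp: in_set_conv_nth)
  then have "halts_within (recf_code g) (list_encode Ls) a b"
    unfolding halts_within_def using Ls(1)
    by (intro exI[of _ "list_encode Ls"] conjI exI[of _ i]) (simp_all add: valid_trace_code_iff)
  then show "\<exists>t. halts_within (recf_code g) t a b" by blast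
qed


section \<open>The interpolant of a stagewise enumeration\<close>

text \<open>A c.e. relation is given by a stagewise enumeration \<open>W\<close>: \<open>W t a b\<close> says that the pair
  \<open>(a, b)\<close> has been enumerated by stage \<open>t\<close>.\<close>

definition stage_mono :: "(nat \<Rightarrow> nat \<Rightarrow> nat \<Rightarrow> bool) \<Rightarrow> bool" where
  "stage_mono W \<longleftrightarrow> (\<forall>t t' a b. W t a b \<longrightarrow> t \<le> t' \<longrightarrow> W t' a b)"

text \<open>The interpolant lives on \<open>\<nat>\<close>: the even number \<open>2 * a\<close> stands for the element \<open>a\<close>,
  and the odd number \<open>2 * s + 1\<close> is a witness, placed below \<open>wit_hi s\<close> and, once activated,
  above \<open>wit_lo1 s\<close> and \<open>wit_lo2 s\<close>. The padding \<open>t\<close> in \<open>s = \<langle>x1, x2, y, t\<rangle>\<close> gives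
  \<open>t \<le> s\<close>, so some witness for \<open>(x1, x2, y)\<close> is activated at a stage late enough to see
  any given relations.\<close>

definition wit_lo1 :: "nat \<Rightarrow> nat" where "wit_lo1 s = pfst s"
definition wit_lo2 :: "nat \<Rightarrow> nat" where "wit_lo2 s = pfst (psnd s)"
definition wit_hi :: "nat \<Rightarrow> nat" where "wit_hi s = pfst (psnd (psnd s))"

lemma wit_le: "wit_lo1 s \<le> s" "wit_lo2 s \<le> s" "wit_hi s \<le> s"
  unfolding wit_lo1_def wit_lo2_def wit_hi_def by (meson pfst_le psnd_le le_trans)+

lemma wit_prod_encode:
  "wit_lo1 (prod_encode (a, prod_encode (b, prod_encode (c, d)))) = a"
  "wit_lo2 (prod_encode (a, prod_encode (b, prod_encode (c, d)))) = b"
  "wit_hi (prod_encode (a, prod_encode (b, prod_encode (c, d)))) = c"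
  by (simp_all add: wit_lo1_def wit_lo2_def wit_hi_def)

lemma le_prod_encode_4: "d \<le> prod_encode (a, prod_encode (b, prod_encode (c, d)))"
  by (meson le_prod_encode_2 le_trans)

lemma wit_less_odd:
  assumes "odd u"
  shows "wit_lo1 (u div 2) < u" "wit_lo2 (u div 2) < u" "wit_hi (u div 2) < u"
  using assms wit_le[of "u div 2"] by (auto elim!: oddE)

text \<open>When the relation is interpolable, each witness \<open>u\<close> is realized by an element \<open>c\<close> lying
  below the realization of \<open>wit_hi\<close> and, if active, above those of \<open>wit_lo1\<close> and \<open>wit_lo2\<close>;
  the element is found by searching for a pair \<open>w = \<langle>c, t\<rangle>\<close> of an element and a stage.
  Besides \<open>c\<close>, \<open>realize\<close> returns the stage by which the realization is found.\<close>

definition realizes :: "(nat \<Rightarrow> nat \<Rightarrow> nat \<Rightarrow> bool) \<Rightarrow> (nat \<Rightarrow> bool) \<Rightarrow> nat \<Rightarrow> nat \<Rightarrow> nat \<Rightarrow> nat \<Rightarrow> nat \<Rightarrow> bool" where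
  "realizes W A s a1 a2 b w \<longleftrightarrow>
     W (psnd w) (pfst w) b \<and> (A s \<longrightarrow> W (psnd w) a1 (pfst w) \<and> W (psnd w) a2 (pfst w))"

function realize :: "(nat \<Rightarrow> nat \<Rightarrow> nat \<Rightarrow> bool) \<Rightarrow> (nat \<Rightarrow> bool) \<Rightarrow> nat \<Rightarrow> (nat \<times> nat) option" where
  "realize W A u = (if even u then Some (u div 2, 0) else
     (case realize W A (wit_hi (u div 2)) of None \<Rightarrow> None | Some (b, fy) \<Rightarrow>
     (case realize W A (wit_lo1 (u div 2)) of None \<Rightarrow> None | Some (a1, f1) \<Rightarrow>
     (case realize W A (wit_lo2 (u div 2)) of None \<Rightarrow> None | Some (a2, f2) \<Rightarrow>
       (if \<exists>w. realizes W A (u div 2) a1 a2 b w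
        then Some (pfst (LEAST w. realizes W A (u div 2) a1 a2 b w),
                   max (LEAST w. realizes W A (u div 2) a1 a2 b w) (max fy (max f1 f2)))
        else None)))))"
  by pat_completeness auto
termination
  by (relation "Wellfounded.measure (\<lambda>(W, A, u). u)") (auto simp: wit_less_odd)

declare realize.simps[simp del]

lemma realize_even: "even u \<Longrightarrow> realize W A u = Some (u div 2, 0)"
  by (simp add: realize.simps)

lemma realize_odd: "odd u \<Longrightarrow> realize W A u =
    (case realize W A (wit_hi (u div 2)) of None \<Rightarrow> None | Some (b, fy) \<Rightarrow>
     (case realize W A (wit_lo1 (u div 2)) of None \<Rightarrow> None | Some (a1, f1) \<Rightarrow>
     (case realize W A (wit_lo2 (u div 2)) of None \<Rightarrow> None | Some (a2, f2) \<Rightarrow>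
       (if \<exists>w. realizes W A (u div 2) a1 a2 b w
        then Some (pfst (LEAST w. realizes W A (u div 2) a1 a2 b w),
                   max (LEAST w. realizes W A (u div 2) a1 a2 b w) (max fy (max f1 f2)))
        else None))))"
  by (subst realize.simps) simp

lemma realize_oddE:
  assumes "odd u" "realize W A u = Some (c, f)"
  obtains b fy a1 f1 a2 f2 where "realize W A (wit_hi (u div 2)) = Some (b, fy)"
    "realize W A (wit_lo1 (u div 2)) = Some (a1, f1)" "realize W A (wit_lo2 (u div 2)) = Some (a2, f2)"
    "realizes W A (u div 2) a1 a2 b (LEAST w. realizes W A (u div 2) a1 a2 b w)"
    "c = pfst (LEAST w. realizes W A (u div 2) a1 a2 b w)"
    "f = max (LEAST w. realizes W A (u div 2) a1 a2 b w) (max fy (max f1 f2))"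
proof -
  let ?s = "u div 2"
  obtain b fy where hi: "realize W A (wit_hi ?s) = Some (b, fy)"
    using assms by (cases "realize W A (wit_hi ?s)") (auto simp: realize_odd)
  obtain a1 f1 where lo1: "realize W A (wit_lo1 ?s) = Some (a1, f1)"
    using assms hi by (cases "realize W A (wit_lo1 ?s)") (auto simp: realize_odd)
  obtain a2 f2 where lo2: "realize W A (wit_lo2 ?s) = Some (a2, f2)"
    using assms hi lo1 by (cases "realize W A (wit_lo2 ?s)") (auto simp: realize_odd)
  have ex: "\<exists>w. realizes W A ?s a1 a2 b w"
    using assms hi lo1 lo2 by (auto simp: realize_odd split: if_splits)
  then have "c = pfst (LEAST w. realizes W A ?s a1 a2 b w)"
    "f = max (LEAST w. realizes W A ?s a1 a2 b w) (max fy (max f1 f2))"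
    using assms hi lo1 lo2 by (simp_all add: realize_odd)
  then show ?thesis using that hi lo1 lo2 LeastI_ex[OF ex] by blast
qed

lemma realize_oddI:
  assumes "odd u" "realize W A (wit_hi (u div 2)) = Some (b, fy)"
    "realize W A (wit_lo1 (u div 2)) = Some (a1, f1)" "realize W A (wit_lo2 (u div 2)) = Some (a2, f2)"
    "realizes W A (u div 2) a1 a2 b w"
  shows "\<exists>c f. realize W A u = Some (c, f)"
  using assms by (auto simp: realize_odd)

lemma realize_cong_active:
  "(\<And>j. j \<le> u div 2 \<Longrightarrow> A j = A' j) \<Longrightarrow> realize W A u = realize W A' u"
proof (induct u rule: less_induct)
  case (less u)
  show ?case
  proof (cases "even u")
    case True then show ?thesis by (simp add: realize_even)
  next
    case False
    let ?s = "u div 2"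
    have IH: "realize W A p = realize W A' p" if "p < u" "p \<le> ?s" for p
      using less(1)[OF that(1)] less(2) that(2) by (meson div_le_dividend le_trans)
    note wit = wit_less_odd[OF False] wit_le[of ?s]
    have "realize W A (wit_hi ?s) = realize W A' (wit_hi ?s)"
      "realize W A (wit_lo1 ?s) = realize W A' (wit_lo1 ?s)"
      "realize W A (wit_lo2 ?s) = realize W A' (wit_lo2 ?s)"
      using IH wit by blast+
    moreover have "realizes W A ?s = realizes W A' ?s"
      using less(2)[of ?s] by (auto simp: realizes_def fun_eq_iff)
    ultimately show ?thesis by (simp only: realize_odd[OF False])
  qed
qed

definition realize_by :: "(nat \<Rightarrow> nat \<Rightarrow> nat \<Rightarrow> bool) \<Rightarrow> (nat \<Rightarrow> bool) \<Rightarrow> nat \<Rightarrow> nat \<Rightarrow> nat option" where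
  "realize_by W A t u =
     (case realize W A u of Some (c, f) \<Rightarrow> if f \<le> t then Some c else None | None \<Rightarrow> None)"

lemma realize_by_mono: "realize_by W A t u = Some c \<Longrightarrow> t \<le> t' \<Longrightarrow> realize_by W A t' u = Some c"
  by (auto simp: realize_by_def split: option.splits if_splits)

lemma realize_by_SomeD: "realize_by W A t u = Some c \<Longrightarrow> \<exists>f. realize W A u = Some (c, f)"
  by (auto simp: realize_by_def split: option.splits if_splits)

lemma realize_by_SomeI: "realize W A u = Some (c, f) \<Longrightarrow> f \<le> t \<Longrightarrow> realize_by W A t u = Some c"
  by (auto simp: realize_by_def)

text \<open>The edges available at stage \<open>t\<close>, where \<open>ph\<close> gives the realizations known by then.\<close>

definition edge :: "(nat \<Rightarrow> nat \<Rightarrow> nat \<Rightarrow> bool) \<Rightarrow> (nat \<Rightarrow> bool) \<Rightarrow> (nat \<Rightarrow> nat option) \<Rightarrow> nat \<Rightarrow> nat \<Rightarrow> nat \<Rightarrow> bool" where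
  "edge W A ph t u v \<longleftrightarrow>
    (even u \<and> even v \<and> W t (u div 2) (v div 2)) \<or>
    (odd u \<and> u div 2 < t \<and> v = wit_hi (u div 2)) \<or>
    (odd v \<and> v div 2 < t \<and> A (v div 2) \<and> (u = wit_lo1 (v div 2) \<or> u = wit_lo2 (v div 2))) \<or>
    (even u \<and> odd v \<and> v div 2 < t \<and> (\<exists>c. ph v = Some c \<and> W t (u div 2) c)) \<or>
    (odd u \<and> even v \<and> u div 2 < t \<and> (\<exists>c. ph u = Some c \<and> W t c (v div 2)))"

definition walk :: "(nat \<Rightarrow> nat \<Rightarrow> bool) \<Rightarrow> nat \<Rightarrow> nat \<Rightarrow> nat \<Rightarrow> bool" where
  "walk G t u v \<longleftrightarrow> (\<exists>l. list_encode l \<le> t \<and> 2 \<le> length l \<and> hd l = u \<and> last l = v \<and> successively G l)"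

lemma walk_edge: "G u v \<Longrightarrow> walk G (list_encode [u, v]) u v"
  unfolding walk_def by (intro exI[of _ "[u, v]"]) auto

lemma walk_mono:
  assumes "walk G t u v" "\<And>x y. G x y \<Longrightarrow> G' x y" "t \<le> t'"
  shows "walk G' t' u v"
proof -
  obtain l where l: "list_encode l \<le> t" "2 \<le> length l" "hd l = u" "last l = v" "successively G l"
    using assms(1) unfolding walk_def by blast
  have "successively G' l" using l(5) by (rule successively_mono) (rule assms(2))
  then show ?thesis unfolding walk_def using l assms(3) by (intro exI[of _ l]) auto
qed

lemma walk_trans: "walk G t u v \<Longrightarrow> walk G t v w \<Longrightarrow> \<exists>t'. walk G t' u w"
proof -
  assume "walk G t u v" "walk G t v w"
  then obtain l1 l2 where l1: "2 \<le> length l1" "hd l1 = u" "last l1 = v" "successively G l1"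
    and l2: "2 \<le> length l2" "hd l2 = v" "last l2 = w" "successively G l2"
    unfolding walk_def by blast
  define r where "r = tl l2"
  have r: "l2 = v # r" "r \<noteq> []" using l2(1,2) unfolding r_def by (cases l2, auto)+
  have "successively G (l1 @ r)"
    using l1(1,3,4) l2(4) r by (auto simp: successively_append_iff successively_Cons)
  moreover have "2 \<le> length (l1 @ r)" "hd (l1 @ r) = u" "last (l1 @ r) = w"
    using l1(1,2) l2(3) r by (auto simp: last_append hd_append)
  ultimately show ?thesis unfolding walk_def by blast
qed

lemma walk_imp:
  assumes "walk G t u v" "transp P" "\<And>x y. x \<le> t \<Longrightarrow> y \<le> t \<Longrightarrow> G x y \<Longrightarrow> P x y"
  shows "P u v"
proof -
  obtain l where l: "list_encode l \<le> t" "2 \<le> length l" "hd l = u" "last l = v" "successively G l"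
    using assms(1) unfolding walk_def by blast
  have "successively P l"
    using l(1,5) assms(3) by (elim successively_mono) (meson mem_le_list_encode le_trans)
  then have "sorted_wrt P l" using assms(2) by (simp add: successively_conv_sorted_wrt)
  moreover have "l = hd l # tl l" "tl l \<noteq> []" using l(2) by (cases l, auto)+
  ultimately show ?thesis using l(3,4) by (metis last_ConsR last_in_set sorted_wrt.simps(2))
qed

definition reach :: "(nat \<Rightarrow> nat \<Rightarrow> nat \<Rightarrow> bool) \<Rightarrow> (nat \<Rightarrow> bool) \<Rightarrow> nat \<Rightarrow> nat \<Rightarrow> nat \<Rightarrow> bool" where
  "reach W A t = walk (edge W A (realize_by W A t) t) t"

definition activation :: "(nat \<Rightarrow> nat \<Rightarrow> nat \<Rightarrow> bool) \<Rightarrow> nat \<Rightarrow> (nat \<Rightarrow> bool) \<Rightarrow> bool" where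
  "activation W s A \<longleftrightarrow> reach W A s (wit_lo1 s) (wit_hi s) \<and> reach W A s (wit_lo2 s) (wit_hi s)"

text \<open>Witness \<open>s\<close> becomes active when both its lower points are seen below its upper point by
  stage \<open>s\<close>; since this only refers to the activity of earlier witnesses
  (\<open>reach_cong_active\<close>), activity is defined by course-of-values recursion.\<close>

primrec active_prefix :: "(nat \<Rightarrow> nat \<Rightarrow> nat \<Rightarrow> bool) \<Rightarrow> nat \<Rightarrow> bool list" where
  "active_prefix W 0 = []"
| "active_prefix W (Suc s) = active_prefix W s @ [activation W s (\<lambda>j. j < s \<and> active_prefix W s ! j)]"

definition active :: "(nat \<Rightarrow> nat \<Rightarrow> nat \<Rightarrow> bool) \<Rightarrow> nat \<Rightarrow> bool" where
  "active W s = active_prefix W (Suc s) ! s"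

definition interpolant :: "(nat \<Rightarrow> nat \<Rightarrow> nat \<Rightarrow> bool) \<Rightarrow> nat \<Rightarrow> nat \<Rightarrow> bool" where
  "interpolant W x y \<longleftrightarrow> (\<exists>t. reach W (active W) t x y)"

lemma edge_cong_active:
  assumes "\<And>j. j < t \<Longrightarrow> A j = A' j"
  shows "edge W A (realize_by W A t) t u v = edge W A' (realize_by W A' t) t u v"
proof -
  have "realize_by W A t v = realize_by W A' t v" if "v div 2 < t" for v
  proof -
    have "realize W A v = realize W A' v" using that assms by (intro realize_cong_active) simp
    then show ?thesis by (simp add: realize_by_def)
  qed
  then show ?thesis unfolding edge_def using assms by (simp cong: conj_cong)
qed

lemma reach_cong_active: "(\<And>j. j < t \<Longrightarrow> A j = A' j) \<Longrightarrow> reach W A t u v = reach W A' t u v"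
proof -
  assume "\<And>j. j < t \<Longrightarrow> A j = A' j"
  then have "edge W A (realize_by W A t) t = edge W A' (realize_by W A' t) t"
    using edge_cong_active by blast
  then show ?thesis unfolding reach_def by simp
qed

lemma length_active_prefix[simp]: "length (active_prefix W s) = s"
  by (induct s) auto

lemma nth_active_prefix: "j < s \<Longrightarrow> active_prefix W s ! j = active W j"
  by (induct s) (auto simp: active_def nth_append less_Suc_eq)

lemma active_unfold: "active W s = activation W s (active W)"
proof -
  have "active W s = activation W s (\<lambda>j. j < s \<and> active_prefix W s ! j)"
    by (simp add: active_def nth_append)
  also have "(\<lambda>j. j < s \<and> active_prefix W s ! j) = (\<lambda>j. j < s \<and> active W j)"
    using nth_active_prefix by auto
  also have "activation W s (\<lambda>j. j < s \<and> active W j) = activation W s (active W)"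
    unfolding activation_def using reach_cong_active[of s "\<lambda>j. j < s \<and> active W j" "active W"] by simp
  finally show ?thesis .
qed

lemma edge_mono:
  assumes "stage_mono W" "edge W A (realize_by W A t) t u v" "t \<le> t'"
  shows "edge W A (realize_by W A t') t' u v"
proof -
  have W: "W t a b \<Longrightarrow> W t' a b" for a b using assms(1,3) unfolding stage_mono_def by blast
  have ph: "realize_by W A t x = Some c \<Longrightarrow> realize_by W A t' x = Some c" for x c
    using assms(3) realize_by_mono by blast
  show ?thesis using assms(2,3) unfolding edge_def by (auto dest: W ph)
qed

lemma reach_mono:
  assumes "stage_mono W" "reach W A t u v" "t \<le> t'"
  shows "reach W A t' u v"
  using assms(2) unfolding reach_def
  by (rule walk_mono) (use edge_mono[OF assms(1) _ assms(3)] assms(3) in auto)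

lemma reach_trans:
  assumes "stage_mono W" "reach W A t u v" "reach W A t' v w"
  shows "\<exists>t''. reach W A t'' u w"
proof -
  let ?T = "max t t'"
  have "reach W A ?T u v" "reach W A ?T v w" using assms reach_mono by (meson max.cobounded1 max.cobounded2)+
  then obtain T' where "walk (edge W A (realize_by W A ?T) ?T) T' u w"
    unfolding reach_def using walk_trans by blast
  then have "reach W A (max ?T T') u w"
    unfolding reach_def by (rule walk_mono) (auto intro: edge_mono[OF assms(1)])
  then show ?thesis by blast
qed

lemma reach_of_edge:
  assumes "stage_mono W" "edge W A (realize_by W A t) t u v"
  shows "\<exists>t'. reach W A t' u v"
proof -
  have "edge W A (realize_by W A (max t (list_encode [u, v]))) (max t (list_encode [u, v])) u v"
    using assms by (rule edge_mono) simp
  then have "reach W A (max t (list_encode [u, v])) u v"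
    unfolding reach_def by (rule walk_mono[OF walk_edge]) simp_all
  then show ?thesis by blast
qed

lemma transp_interpolant: "stage_mono W \<Longrightarrow> transp (interpolant W)"
  unfolding transp_def interpolant_def using reach_trans by metis

text \<open>Every point \<open>y\<close> lies above the witness \<open>\<langle>0, 0, y, 0\<rangle>\<close>, and points \<open>x1, x2\<close> below \<open>y\<close>
  lie below the witness \<open>\<langle>x1, x2, y, t\<rangle>\<close> once \<open>t\<close> is late enough to see both relations.\<close>

lemma interpolable_interpolant:
  assumes m: "stage_mono W"
  shows "interpolable (interpolant W)"
  unfolding interpolable_def directed_in_def
proof (intro allI conjI ballI)
  fix y
  let ?s = "prod_encode (0, prod_encode (0, prod_encode (y, 0)))"
  have "edge W (active W) (realize_by W (active W) (Suc ?s)) (Suc ?s) (2 * ?s + 1) y"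
    unfolding edge_def by (simp add: wit_prod_encode)
  then show "{x. interpolant W x y} \<noteq> {}"
    unfolding interpolant_def using reach_of_edge[OF m] by blast
  fix x1 x2 assume "x1 \<in> {x. interpolant W x y}" "x2 \<in> {x. interpolant W x y}"
  then obtain t1 t2 where "reach W (active W) t1 x1 y" "reach W (active W) t2 x2 y"
    unfolding interpolant_def by blast
  then have t: "reach W (active W) (max t1 t2) x1 y" "reach W (active W) (max t1 t2) x2 y"
    using reach_mono[OF m] by (meson max.cobounded1 max.cobounded2)+
  let ?s = "prod_encode (x1, prod_encode (x2, prod_encode (y, max t1 t2)))"
  have "reach W (active W) ?s x1 y" "reach W (active W) ?s x2 y"
    using t reach_mono[OF m _ le_prod_encode_4] by blast+
  then have "active W ?s" using active_unfold[of W ?s] by (simp add: activation_def wit_prod_encode)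
  then have "edge W (active W) (realize_by W (active W) (Suc ?s)) (Suc ?s) x1 (2 * ?s + 1)"
    "edge W (active W) (realize_by W (active W) (Suc ?s)) (Suc ?s) x2 (2 * ?s + 1)"
    "edge W (active W) (realize_by W (active W) (Suc ?s)) (Suc ?s) (2 * ?s + 1) y"
    unfolding edge_def by (simp_all add: wit_prod_encode)
  then show "\<exists>z\<in>{x. interpolant W x y}. interpolant W x1 z \<and> interpolant W x2 z"
    unfolding interpolant_def using reach_of_edge[OF m] by blast
qed

context
  fixes W :: "nat \<Rightarrow> nat \<Rightarrow> nat \<Rightarrow> bool" and R :: "nat \<Rightarrow> nat \<Rightarrow> bool"
  assumes mono: "stage_mono W" and enum: "\<And>a b. R a b \<longleftrightarrow> (\<exists>t. W t a b)"
    and trans: "transp R" and interp: "interpolable R"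
begin

lemma enumD: "W t a b \<Longrightarrow> R a b"
  using enum by blast

lemma W_mono: "W t a b \<Longrightarrow> t \<le> t' \<Longrightarrow> W t' a b"
  using mono unfolding stage_mono_def by blast

lemma edge_sound:
  assumes "edge W (active W) (realize_by W (active W) t) t p q"
    "realize W (active W) p = Some (\<alpha>, f)" "realize W (active W) q = Some (\<beta>, f')"
  shows "R \<alpha> \<beta>"
  using assms(1) unfolding edge_def
proof (elim disjE conjE exE)
  assume "even p" "even q" "W t (p div 2) (q div 2)"
  then show ?thesis using assms(2,3) by (simp add: realize_even enumD)
next
  assume "odd p" "p div 2 < t" "q = wit_hi (p div 2)"
  then show ?thesis using assms(2,3) by (elim realize_oddE) (auto simp: realizes_def intro: enumD)
next
  assume "odd q" "q div 2 < t" "active W (q div 2)" "p = wit_lo1 (q div 2)"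
  then show ?thesis using assms(2,3) by (elim realize_oddE) (auto simp: realizes_def intro: enumD)
next
  assume "odd q" "q div 2 < t" "active W (q div 2)" "p = wit_lo2 (q div 2)"
  then show ?thesis using assms(2,3) by (elim realize_oddE) (auto simp: realizes_def intro: enumD)
next
  fix c assume "even p" "realize_by W (active W) t q = Some c" "W t (p div 2) c"
  then show ?thesis using assms(2,3) realize_by_SomeD by (fastforce simp: realize_even intro: enumD)
next
  fix c assume "even q" "realize_by W (active W) t p = Some c" "W t c (q div 2)"
  then show ?thesis using assms(2,3) realize_by_SomeD by (fastforce simp: realize_even intro: enumD)
qed

definition real_pt :: "nat \<Rightarrow> nat" where
  "real_pt u = fst (the (realize W (active W) u))"

lemma reach_sound:
  assumes "reach W (active W) t u v" "\<And>x. x \<le> t \<Longrightarrow> realize W (active W) x \<noteq> None"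
  shows "R (real_pt u) (real_pt v)"
  using assms(1) unfolding reach_def
proof (rule walk_imp[where P = "\<lambda>x y. R (real_pt x) (real_pt y)"])
  show "transp (\<lambda>x y. R (real_pt x) (real_pt y))" using trans unfolding transp_def by blast
  fix x y assume xy: "x \<le> t" "y \<le> t" "edge W (active W) (realize_by W (active W) t) t x y"
  obtain \<alpha> f \<beta> f' where "realize W (active W) x = Some (\<alpha>, f)" "realize W (active W) y = Some (\<beta>, f')"
    using assms(2) xy(1,2) by fastforce
  then show "R (real_pt x) (real_pt y)" using edge_sound[OF xy(3)] by (simp add: real_pt_def)
qed

text \<open>Totality is where interpolability of \<open>R\<close> is used: an active witness has its lower points
  below its upper point in \<open>R\<close>, so a realization exists.\<close>

lemma realize_total: "realize W (active W) u \<noteq> None"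
proof (induct u rule: less_induct)
  case (less u)
  show ?case
  proof (cases "even u")
    case True then show ?thesis by (simp add: realize_even)
  next
    case False
    let ?s = "u div 2"
    note wit = wit_less_odd[OF False]
    obtain b fy where b: "realize W (active W) (wit_hi ?s) = Some (b, fy)" using less(1)[OF wit(3)] by force
    obtain a1 f1 where a1: "realize W (active W) (wit_lo1 ?s) = Some (a1, f1)" using less(1)[OF wit(1)] by force
    obtain a2 f2 where a2: "realize W (active W) (wit_lo2 ?s) = Some (a2, f2)" using less(1)[OF wit(2)] by force
    have "\<exists>c. R c b \<and> (active W ?s \<longrightarrow> R a1 c \<and> R a2 c)"
    proof (cases "active W ?s")
      case True
      then have "reach W (active W) ?s (wit_lo1 ?s) (wit_hi ?s)" "reach W (active W) ?s (wit_lo2 ?s) (wit_hi ?s)"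
        using active_unfold[of W ?s] by (auto simp: activation_def)
      moreover have "x \<le> ?s \<Longrightarrow> realize W (active W) x \<noteq> None" for x
        using less(1)[of x] False by (auto elim!: oddE)
      ultimately have "R (real_pt (wit_lo1 ?s)) (real_pt (wit_hi ?s))"
        "R (real_pt (wit_lo2 ?s)) (real_pt (wit_hi ?s))" using reach_sound by blast+
      then have "R a1 b" "R a2 b" using a1 a2 b by (simp_all add: real_pt_def)
      then show ?thesis using interp unfolding interpolable_def directed_in_def by blast
    next
      case False
      then show ?thesis using interp unfolding interpolable_def directed_in_def by blast
    qed
    then obtain c where c: "R c b" "active W ?s \<longrightarrow> R a1 c \<and> R a2 c" by blast
    then obtain t1 t2 t3 where t: "W t1 c b" "active W ?s \<longrightarrow> W t2 a1 c \<and> W t3 a2 c"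
      by (metis enum)
    let ?t = "max t1 (max t2 t3)"
    have "W ?t c b" "active W ?s \<longrightarrow> W ?t a1 c \<and> W ?t a2 c"
      using t W_mono by (meson max.cobounded1 max.cobounded2 le_trans)+
    then have "realizes W (active W) ?s a1 a2 b (prod_encode (c, ?t))" by (simp add: realizes_def)
    then show ?thesis using realize_oddI[OF False b a1 a2] by blast
  qed
qed

lemma real_pt_even: "real_pt (2 * a) = a"
  by (simp add: real_pt_def realize_even)

lemma realize_by_eventually: "\<exists>T. \<forall>t\<ge>T. realize_by W (active W) t u = Some (real_pt u)"
proof -
  obtain c f where "realize W (active W) u = Some (c, f)" using realize_total[of u] by force
  then show ?thesis by (intro exI[of _ f]) (auto simp: real_pt_def intro: realize_by_SomeI)
qed

lemma interpolant_to_even: "R (real_pt u) c \<Longrightarrow> interpolant W u (2 * c)"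
proof -
  assume "R (real_pt u) c"
  then obtain t0 where "W t0 (real_pt u) c" using enum by blast
  moreover obtain T where T: "\<forall>t\<ge>T. realize_by W (active W) t u = Some (real_pt u)"
    using realize_by_eventually by blast
  ultimately have "W (max t0 (max T (Suc (u div 2)))) (real_pt u) c"
    using W_mono by simp
  then have "edge W (active W) (realize_by W (active W) (max t0 (max T (Suc (u div 2)))))
      (max t0 (max T (Suc (u div 2)))) u (2 * c)"
    using T unfolding edge_def by (cases "even u") (auto simp: real_pt_def realize_even)
  then show ?thesis unfolding interpolant_def using reach_of_edge[OF mono] by blast
qed

lemma interpolant_from_even: "R c (real_pt v) \<Longrightarrow> interpolant W (2 * c) v"
proof -
  assume "R c (real_pt v)"
  then obtain t0 where "W t0 c (real_pt v)" using enum by blast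
  moreover obtain T where T: "\<forall>t\<ge>T. realize_by W (active W) t v = Some (real_pt v)"
    using realize_by_eventually by blast
  ultimately have "W (max t0 (max T (Suc (v div 2)))) c (real_pt v)"
    using W_mono by simp
  then have "edge W (active W) (realize_by W (active W) (max t0 (max T (Suc (v div 2)))))
      (max t0 (max T (Suc (v div 2)))) (2 * c) v"
    using T unfolding edge_def by (cases "even v") (auto simp: real_pt_def realize_even)
  then show ?thesis unfolding interpolant_def using reach_of_edge[OF mono] by blast
qed

lemma interpolant_iff_real: "interpolant W u v \<longleftrightarrow> R (real_pt u) (real_pt v)"
proof
  assume "interpolant W u v"
  then show "R (real_pt u) (real_pt v)"
    unfolding interpolant_def using reach_sound realize_total by blast
next
  assume "R (real_pt u) (real_pt v)"
  then obtain c where "R c (real_pt v)" "R (real_pt u) c"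
    using interp unfolding interpolable_def directed_in_def by blast
  then have "interpolant W u (2 * c)" "interpolant W (2 * c) v"
    using interpolant_to_even interpolant_from_even by blast+
  then show "interpolant W u v" using transp_interpolant[OF mono] by (auto elim: transpE)
qed

end


section \<open>Pullbacks along a retraction are computably homeomorphic\<close>

lemma topspace_ideal_space: "topspace (ideal_space R) = ideals R"
proof -
  have "\<Union> (range (basic_open R)) = ideals R"
  proof (intro set_eqI iffI)
    fix I assume "I \<in> ideals R"
    then obtain n where "n \<in> I" unfolding ideals_def is_ideal_def directed_in_def by blast
    then show "I \<in> \<Union> (range (basic_open R))" using \<open>I \<in> ideals R\<close> by (auto simp: basic_open_def)
  qed (auto simp: basic_open_def)
  then show ?thesis by (simp add: ideal_space_def)
qed

lemma openin_basic_open: "openin (ideal_space R) (basic_open R n)"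
  unfolding ideal_space_def by (rule topology_generated_by_Basis) simp

lemma openin_Union_basic_open: "openin (ideal_space R) (\<Union>m\<in>S. basic_open R m)"
  by (rule openin_Union) (auto simp: openin_basic_open)

lemma continuous_map_ideal_space:
  assumes "\<And>I. is_ideal Q I \<Longrightarrow> is_ideal R (h I)"
    "\<And>n. \<exists>S. {I \<in> ideals Q. h I \<in> basic_open R n} = (\<Union>m\<in>S. basic_open Q m)"
  shows "continuous_map (ideal_space Q) (ideal_space R) h"
  unfolding ideal_space_def[of R]
proof (rule continuous_on_generated_topo)
  show "h ` topspace (ideal_space Q) \<subseteq> \<Union> (range (basic_open R))"
    using topspace_ideal_space[of Q] topspace_ideal_space[of R] assms(1)
    by (auto simp: ideals_def ideal_space_def)
  fix U assume "U \<in> range (basic_open R)"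
  then obtain n where "U = basic_open R n" by blast
  then have "h -` U \<inter> topspace (ideal_space Q) = {I \<in> ideals Q. h I \<in> basic_open R n}"
    using topspace_ideal_space[of Q] by auto
  then show "openin (ideal_space Q) (h -` U \<inter> topspace (ideal_space Q))"
    using assms(2)[of n] openin_Union_basic_open by metis
qed

text \<open>Every \<open>u\<close> is equivalent to \<open>\<iota> (\<phi> u)\<close> under the pullback \<open>Q\<close>, which is why preimages
  under \<open>\<iota>\<close> and \<open>\<phi>\<close> are mutually inverse on ideals.\<close>

context
  fixes Q R :: "nat \<Rightarrow> nat \<Rightarrow> bool" and \<phi> \<iota> :: "nat \<Rightarrow> nat"
  assumes pullback: "\<And>u v. Q u v \<longleftrightarrow> R (\<phi> u) (\<phi> v)" and retraction: "\<And>a. \<phi> (\<iota> a) = a"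
begin

lemma section_mem_ideal_iff: "is_ideal Q J \<Longrightarrow> \<iota> (\<phi> u) \<in> J \<longleftrightarrow> u \<in> J"
proof -
  assume J: "is_ideal Q J"
  have "v \<in> J" if "w \<in> J" "Q u' w" "\<phi> v = \<phi> u'" for u' v w
    using that J pullback unfolding is_ideal_def by metis
  moreover have "\<exists>w\<in>J. Q x w" if "x \<in> J" for x
    using that J unfolding is_ideal_def directed_in_def by blast
  ultimately show ?thesis using retraction by metis
qed

lemma is_ideal_vimage_section: "is_ideal Q J \<Longrightarrow> is_ideal R (\<iota> -` J)"
proof -
  assume J: "is_ideal Q J"
  have "\<iota> -` J \<noteq> {}"
  proof -
    obtain u where "u \<in> J" using J unfolding is_ideal_def directed_in_def by blast
    then show ?thesis using section_mem_ideal_iff[OF J] by blast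
  qed
  moreover have "\<exists>z\<in>\<iota> -` J. R x z \<and> R y z" if "x \<in> \<iota> -` J" "y \<in> \<iota> -` J" for x y
  proof -
    have "\<iota> x \<in> J" "\<iota> y \<in> J" using that by auto
    then obtain w where "w \<in> J" "Q (\<iota> x) w" "Q (\<iota> y) w"
      using J unfolding is_ideal_def directed_in_def by blast
    then have "\<phi> w \<in> \<iota> -` J" "R x (\<phi> w)" "R y (\<phi> w)"
      using pullback retraction section_mem_ideal_iff[OF J] by auto
    then show ?thesis by blast
  qed
  moreover have "x \<in> \<iota> -` J" if "y \<in> \<iota> -` J" "R x y" for x y
    using that J pullback retraction unfolding is_ideal_def by auto
  ultimately show ?thesis unfolding is_ideal_def directed_in_def by blast
qed

lemma is_ideal_vimage_retraction: "is_ideal R I \<Longrightarrow> is_ideal Q (\<phi> -` I)"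
proof -
  assume I: "is_ideal R I"
  obtain a where "a \<in> I" using I unfolding is_ideal_def directed_in_def by blast
  then have "\<iota> a \<in> \<phi> -` I" using retraction by simp
  then have "\<phi> -` I \<noteq> {}" by blast
  moreover have "\<exists>z\<in>\<phi> -` I. Q x z \<and> Q y z" if "x \<in> \<phi> -` I" "y \<in> \<phi> -` I" for x y
  proof -
    have "\<phi> x \<in> I" "\<phi> y \<in> I" using that by auto
    then obtain c where "c \<in> I" "R (\<phi> x) c" "R (\<phi> y) c"
      using I unfolding is_ideal_def directed_in_def by blast
    then show ?thesis using pullback retraction by (intro bexI[of _ "\<iota> c"]) auto
  qed
  moreover have "x \<in> \<phi> -` I" if "y \<in> \<phi> -` I" "Q x y" for x y
    using that I pullback unfolding is_ideal_def by auto
  ultimately show ?thesis unfolding is_ideal_def directed_in_def by blast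
qed

lemma vimage_section_retraction: "\<iota> -` (\<phi> -` I) = I"
  using retraction by auto

lemma vimage_retraction_section: "is_ideal Q J \<Longrightarrow> \<phi> -` (\<iota> -` J) = J"
  using section_mem_ideal_iff by auto

lemma preimage_vimage_section:
  "{J \<in> ideals Q. \<iota> -` J \<in> basic_open R n} = (\<Union>m\<in>{m. m = \<iota> n}. basic_open Q m)"
  using is_ideal_vimage_section by (auto simp: basic_open_def ideals_def)

lemma preimage_vimage_retraction:
  "{I \<in> ideals R. \<phi> -` I \<in> basic_open Q n} = (\<Union>m\<in>{m. Q n (\<iota> m)}. basic_open R m)"
proof (intro set_eqI iffI)
  fix I assume "I \<in> {I \<in> ideals R. \<phi> -` I \<in> basic_open Q n}"
  then have I: "is_ideal R I" "\<phi> n \<in> I" by (auto simp: basic_open_def ideals_def)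
  then obtain m where "m \<in> I" "R (\<phi> n) m" unfolding is_ideal_def directed_in_def by blast
  then show "I \<in> (\<Union>m\<in>{m. Q n (\<iota> m)}. basic_open R m)"
    using I pullback retraction by (auto simp: basic_open_def ideals_def)
next
  fix I assume "I \<in> (\<Union>m\<in>{m. Q n (\<iota> m)}. basic_open R m)"
  then obtain m where m: "Q n (\<iota> m)" "is_ideal R I" "m \<in> I" by (auto simp: basic_open_def ideals_def)
  then have "\<phi> n \<in> I" using pullback retraction unfolding is_ideal_def by auto
  then show "I \<in> {I \<in> ideals R. \<phi> -` I \<in> basic_open Q n}"
    using m is_ideal_vimage_retraction by (auto simp: basic_open_def ideals_def)
qed

lemma homeomorphic_maps_vimage:
  "homeomorphic_maps (ideal_space Q) (ideal_space R) (vimage \<iota>) (vimage \<phi>)"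
proof -
  have "continuous_map (ideal_space Q) (ideal_space R) (vimage \<iota>)"
    using is_ideal_vimage_section preimage_vimage_section by (blast intro: continuous_map_ideal_space)
  moreover have "continuous_map (ideal_space R) (ideal_space Q) (vimage \<phi>)"
    using is_ideal_vimage_retraction preimage_vimage_retraction by (blast intro: continuous_map_ideal_space)
  ultimately show ?thesis
    unfolding homeomorphic_maps_def
    using vimage_section_retraction vimage_retraction_section topspace_ideal_space
    by (auto simp: ideals_def)
qed

lemma computably_homeomorphic_pullback:
  assumes "ce_rel (\<lambda>n m. m = \<iota> n)" "ce_rel (\<lambda>n m. Q n (\<iota> m))"
  shows "computably_homeomorphic Q R"
  unfolding computably_homeomorphic_def ce_preimages_def
  using homeomorphic_maps_vimage preimage_vimage_section preimage_vimage_retraction assms by blast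

end


section \<open>The interpolant of a c.e. relation is c.e.\<close>

text \<open>A pair is related by the interpolant iff some stage \<open>T\<close> admits a certificate: the activity
  history \<open>H\<close> of the witnesses below \<open>T\<close>, a table \<open>P\<close> of the realizations found by stage \<open>T\<close>,
  both checked by bounded recursion, and a walk at stage \<open>T\<close> built from them.\<close>

definition walk_code :: "(nat \<Rightarrow> nat \<Rightarrow> bool) \<Rightarrow> nat \<Rightarrow> nat \<Rightarrow> nat \<Rightarrow> bool" where
  "walk_code G t u v \<longleftrightarrow> (\<exists>l<Suc t. 2 \<le> lenc l \<and> hdc l = u \<and> nthc l (lenc l - 1) = v \<and>
      (\<forall>i<lenc l - 1. G (nthc l i) (nthc l (Suc i))))"

lemma walk_iff_walk_code: "walk G t u v \<longleftrightarrow> walk_code G t u v"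
proof
  assume "walk G t u v"
  then obtain l where l: "list_encode l \<le> t" "2 \<le> length l" "hd l = u" "last l = v" "successively G l"
    unfolding walk_def by blast
  have "hdc (list_encode l) = u" using l(2,3) by (cases l) auto
  moreover have "l \<noteq> []" using l(2) by (cases l) auto
  then have "nthc (list_encode l) (length l - 1) = v" using l(2,4) by (simp add: last_conv_nth)
  moreover have "\<forall>i<length l - 1. G (nthc (list_encode l) i) (nthc (list_encode l) (Suc i))"
    using l(5) by (simp add: successively_conv_nth)
  ultimately show "walk_code G t u v" unfolding walk_code_def using l(1,2)
    by (intro exI[of _ "list_encode l"]) simp
next
  assume "walk_code G t u v"
  then obtain l where l: "list_encode l < Suc t" "2 \<le> length l" "hdc (list_encode l) = u"
    "nthc (list_encode l) (length l - 1) = v"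
    "\<forall>i<length l - 1. G (nthc (list_encode l) i) (nthc (list_encode l) (Suc i))"
    unfolding walk_code_def by (metis lenc_def list_decode_inverse)
  have "hd l = u" using l(2,3) by (cases l) auto
  moreover have "l \<noteq> []" using l(2) by (cases l) auto
  then have "last l = v" using l(4) by (simp add: last_conv_nth)
  moreover have "successively G l" using l(5) by (simp add: successively_conv_nth)
  ultimately show "walk G t u v" unfolding walk_def using l(1,2) by (intro exI[of _ l]) simp
qed

lemma walk_code_cong:
  assumes "\<And>x y. x \<le> t \<Longrightarrow> y \<le> t \<Longrightarrow> G x y = G' x y"
  shows "walk_code G t u v = walk_code G' t u v"
proof -
  have "G (nthc l i) (nthc l (Suc i)) = G' (nthc l i) (nthc l (Suc i))"
    if "l < Suc t" "i < lenc l - 1" for l i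
  proof (rule assms)
    have "i < lenc l" "Suc i < lenc l" using that(2) by linarith+
    then show "nthc l i \<le> t" "nthc l (Suc i) \<le> t"
      using that(1) nthc_le[of i l] nthc_le[of "Suc i" l] by linarith+
  qed
  then show ?thesis unfolding walk_code_def by blast
qed

lemma edge_cong:
  assumes "\<And>j. j < t \<Longrightarrow> A j = A' j" "ph u = ph' u" "ph v = ph' v"
  shows "edge W A ph t u v = edge W A' ph' t u v"
  using assms unfolding edge_def by (simp cong: conj_cong)

definition hist_bit :: "nat \<Rightarrow> nat \<Rightarrow> bool" where
  "hist_bit H s \<longleftrightarrow> nthc H s \<noteq> 0"

definition tab_entry :: "nat \<Rightarrow> (nat \<times> nat) option \<Rightarrow> nat" where
  "tab_entry T x = (case x of None \<Rightarrow> 0 | Some (c, f) \<Rightarrow> if f \<le> T then Suc (prod_encode (c, f)) else 0)"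

definition tab_realize_by :: "nat \<Rightarrow> nat \<Rightarrow> nat \<Rightarrow> nat option" where
  "tab_realize_by P t u =
     (if nthc P u \<noteq> 0 \<and> psnd (nthc P u - 1) \<le> t then Some (pfst (nthc P u - 1)) else None)"

lemma tab_entry_neq_0: "tab_entry T x \<noteq> 0 \<longleftrightarrow> (\<exists>c f. x = Some (c, f) \<and> f \<le> T)"
  by (auto simp: tab_entry_def split: option.splits)

lemma tab_realize_by_correct:
  "nthc P u = tab_entry T (realize W A u) \<Longrightarrow> t \<le> T \<Longrightarrow> tab_realize_by P t u = realize_by W A t u"
  by (auto simp: tab_realize_by_def realize_by_def tab_entry_def split: option.splits)

definition bounded_least :: "nat \<Rightarrow> (nat \<Rightarrow> bool) \<Rightarrow> nat" where
  "bounded_least n P = (\<Sum>i<Suc n. of_bool (\<forall>j<Suc i. \<not> P j))"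

lemma bounded_least_eq_Least:
  assumes "P w" "w \<le> n"
  shows "bounded_least n P = (LEAST w. P w)"
proof -
  let ?w0 = "LEAST w. P w"
  have w0: "P ?w0" "?w0 \<le> w" using assms(1) by (auto intro: LeastI Least_le)
  have "{i. i < Suc n \<and> (\<forall>j<Suc i. \<not> P j)} = {i. i < ?w0}"
  proof (intro set_eqI iffI)
    fix i assume "i \<in> {i. i < Suc n \<and> (\<forall>j<Suc i. \<not> P j)}"
    then show "i \<in> {i. i < ?w0}" using w0(1) by (metis less_Suc_eq_le mem_Collect_eq not_le)
  next
    fix i assume "i \<in> {i. i < ?w0}"
    then have "\<not> P j" if "j < Suc i" for j using that not_less_Least[of j P] by simp
    then show "i \<in> {i. i < Suc n \<and> (\<forall>j<Suc i. \<not> P j)}"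
      using \<open>i \<in> {i. i < ?w0}\<close> w0(2) assms(2) by auto
  qed
  then show ?thesis unfolding bounded_least_def sum_of_bool_eq_card by simp
qed

definition tab_step :: "(nat \<Rightarrow> nat \<Rightarrow> nat \<Rightarrow> bool) \<Rightarrow> nat \<Rightarrow> nat \<Rightarrow> nat \<Rightarrow> nat \<Rightarrow> nat" where
  "tab_step W H P T u = (if even u then Suc (prod_encode (u div 2, 0)) else
     (let s = u div 2; Ey = nthc P (wit_hi s); E1 = nthc P (wit_lo1 s); E2 = nthc P (wit_lo2 s);
          b = pfst (Ey - 1); a1 = pfst (E1 - 1); a2 = pfst (E2 - 1);
          w = bounded_least T (realizes W (hist_bit H) s a1 a2 b);
          f = max w (max (psnd (Ey - 1)) (max (psnd (E1 - 1)) (psnd (E2 - 1))))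
      in if Ey \<noteq> 0 \<and> E1 \<noteq> 0 \<and> E2 \<noteq> 0 \<and> (\<exists>w<Suc T. realizes W (hist_bit H) s a1 a2 b w) \<and> f \<le> T
         then Suc (prod_encode (pfst w, f)) else 0))"

lemma tab_entry_realize_odd_eq_0:
  assumes "odd u" "tab_entry T (realize W A (wit_hi (u div 2))) = 0 \<or>
    tab_entry T (realize W A (wit_lo1 (u div 2))) = 0 \<or> tab_entry T (realize W A (wit_lo2 (u div 2))) = 0"
  shows "tab_entry T (realize W A u) = 0"
proof (rule ccontr)
  assume "tab_entry T (realize W A u) \<noteq> 0"
  then obtain c f where cf: "realize W A u = Some (c, f)" "f \<le> T" using tab_entry_neq_0 by metis
  obtain b fy a1 f1 a2 f2 where "realize W A (wit_hi (u div 2)) = Some (b, fy)"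
    "realize W A (wit_lo1 (u div 2)) = Some (a1, f1)" "realize W A (wit_lo2 (u div 2)) = Some (a2, f2)"
    "f = max (LEAST w. realizes W A (u div 2) a1 a2 b w) (max fy (max f1 f2))"
    using realize_oddE[OF assms(1) cf(1)] by metis
  then show False using assms(2) cf(2) by (auto simp: tab_entry_def)
qed

lemma tab_entry_realize_odd_late:
  assumes "odd u" "realize W A (wit_hi (u div 2)) = Some (b, fy)"
    "realize W A (wit_lo1 (u div 2)) = Some (a1, f1)" "realize W A (wit_lo2 (u div 2)) = Some (a2, f2)"
    "\<not> (\<exists>w<Suc T. realizes W A (u div 2) a1 a2 b w)"
  shows "tab_entry T (realize W A u) = 0"
proof (cases "\<exists>w. realizes W A (u div 2) a1 a2 b w")
  case True
  then have "T < (LEAST w. realizes W A (u div 2) a1 a2 b w)"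
    using assms(5) LeastI_ex[OF True] by (meson not_less less_Suc_eq_le)
  then show ?thesis using assms(1-4) True by (simp add: realize_odd tab_entry_def)
next
  case False
  then show ?thesis using assms(1-4) by (simp add: realize_odd tab_entry_def)
qed

lemma tab_step_correct:
  assumes "odd u \<Longrightarrow> hist_bit H (u div 2) = A (u div 2)"
    "\<And>x. odd u \<Longrightarrow> x \<in> {wit_hi (u div 2), wit_lo1 (u div 2), wit_lo2 (u div 2)} \<Longrightarrow>
       nthc P x = tab_entry T (realize W A x)"
  shows "tab_step W H P T u = tab_entry T (realize W A u)"
proof (cases "even u")
  case True then show ?thesis by (simp add: tab_step_def realize_even tab_entry_def)
next
  case odd: False
  let ?s = "u div 2"
  have hist: "realizes W (hist_bit H) ?s = realizes W A ?s"
    using assms(1)[OF odd] by (auto simp: realizes_def fun_eq_iff)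
  have P: "nthc P (wit_hi ?s) = tab_entry T (realize W A (wit_hi ?s))"
    "nthc P (wit_lo1 ?s) = tab_entry T (realize W A (wit_lo1 ?s))"
    "nthc P (wit_lo2 ?s) = tab_entry T (realize W A (wit_lo2 ?s))"
    using assms(2)[OF odd] by simp_all
  show ?thesis
  proof (cases "nthc P (wit_hi ?s) \<noteq> 0 \<and> nthc P (wit_lo1 ?s) \<noteq> 0 \<and> nthc P (wit_lo2 ?s) \<noteq> 0")
    case True
    then obtain b fy a1 f1 a2 f2 where c: "realize W A (wit_hi ?s) = Some (b, fy)" "fy \<le> T"
      "realize W A (wit_lo1 ?s) = Some (a1, f1)" "f1 \<le> T" "realize W A (wit_lo2 ?s) = Some (a2, f2)" "f2 \<le> T"
      using P tab_entry_neq_0 by metis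
    then have E: "nthc P (wit_hi ?s) = Suc (prod_encode (b, fy))"
      "nthc P (wit_lo1 ?s) = Suc (prod_encode (a1, f1))" "nthc P (wit_lo2 ?s) = Suc (prod_encode (a2, f2))"
      using P by (simp_all add: tab_entry_def)
    show ?thesis
    proof (cases "\<exists>w<Suc T. realizes W A ?s a1 a2 b w")
      case True
      then have "bounded_least T (realizes W A ?s a1 a2 b) = (LEAST w. realizes W A ?s a1 a2 b w)"
        using bounded_least_eq_Least by (meson less_Suc_eq_le)
      then show ?thesis using odd True E c hist
        by (auto simp: tab_step_def realize_odd tab_entry_def Let_def)
    next
      case False
      then show ?thesis using tab_entry_realize_odd_late[OF odd c(1,3,5)] odd E hist
        by (simp add: tab_step_def Let_def)
    qed
  next
    case False
    then have "tab_entry T (realize W A u) = 0" using P by (intro tab_entry_realize_odd_eq_0[OF odd]) simp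
    then show ?thesis using odd False by (auto simp: tab_step_def Let_def)
  qed
qed

definition reach_tab :: "(nat \<Rightarrow> nat \<Rightarrow> nat \<Rightarrow> bool) \<Rightarrow> nat \<Rightarrow> nat \<Rightarrow> nat \<Rightarrow> nat \<Rightarrow> nat \<Rightarrow> bool" where
  "reach_tab W H P t = walk_code (edge W (hist_bit H) (tab_realize_by P t) t) t"

definition valid_history :: "(nat \<Rightarrow> nat \<Rightarrow> nat \<Rightarrow> bool) \<Rightarrow> nat \<Rightarrow> nat \<Rightarrow> nat \<Rightarrow> bool" where
  "valid_history W H P T \<longleftrightarrow> lenc H = T \<and> (\<forall>s<T. hist_bit H s \<longleftrightarrow>
     reach_tab W H P s (wit_lo1 s) (wit_hi s) \<and> reach_tab W H P s (wit_lo2 s) (wit_hi s))"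

definition valid_table :: "(nat \<Rightarrow> nat \<Rightarrow> nat \<Rightarrow> bool) \<Rightarrow> nat \<Rightarrow> nat \<Rightarrow> nat \<Rightarrow> bool" where
  "valid_table W H P T \<longleftrightarrow> lenc P = Suc T \<and> (\<forall>u<Suc T. nthc P u = tab_step W H P T u)"

definition certified :: "(nat \<Rightarrow> nat \<Rightarrow> nat \<Rightarrow> bool) \<Rightarrow> nat \<Rightarrow> nat \<Rightarrow> bool" where
  "certified W x y \<longleftrightarrow>
     (\<exists>T H P. valid_history W H P T \<and> valid_table W H P T \<and> reach_tab W H P T x y)"

lemma reach_tab_eq_reach:
  assumes "\<And>j. j < n \<Longrightarrow> hist_bit H j = active W j"
    "\<And>x. x \<le> n \<Longrightarrow> nthc P x = tab_entry T (realize W (active W) x)" "n \<le> T"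
  shows "reach_tab W H P n u v = reach W (active W) n u v"
proof -
  have "tab_realize_by P n x = realize_by W (active W) n x" if "x \<le> n" for x
    using assms(2)[OF that] assms(3) by (rule tab_realize_by_correct)
  then have "edge W (hist_bit H) (tab_realize_by P n) n x y = edge W (active W) (realize_by W (active W) n) n x y"
    if "x \<le> n" "y \<le> n" for x y
    using that assms(1) by (intro edge_cong) auto
  then show ?thesis unfolding reach_tab_def reach_def walk_iff_walk_code by (rule walk_code_cong)
qed

lemma certificate_correct:
  assumes "valid_history W H P T" "valid_table W H P T"
  shows "(\<forall>j<n. j < T \<longrightarrow> hist_bit H j = active W j) \<and>
    (\<forall>u<n. u \<le> T \<longrightarrow> nthc P u = tab_entry T (realize W (active W) u))"
proof (induct n)
  case (Suc n)
  then have IH: "\<And>j. j < n \<Longrightarrow> j < T \<Longrightarrow> hist_bit H j = active W j"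
    "\<And>u. u < n \<Longrightarrow> u \<le> T \<Longrightarrow> nthc P u = tab_entry T (realize W (active W) u)" by blast+
  have table: "nthc P n = tab_entry T (realize W (active W) n)" if "n \<le> T"
  proof -
    have "nthc P n = tab_step W H P T n" using assms(2) that unfolding valid_table_def by simp
    also have "\<dots> = tab_entry T (realize W (active W) n)"
      using IH that wit_less_odd[of n] by (intro tab_step_correct) (auto elim!: oddE)
    finally show ?thesis .
  qed
  have history: "hist_bit H n = active W n" if "n < T"
  proof -
    have "nthc P x = tab_entry T (realize W (active W) x)" if "x \<le> n" for x
      using IH(2) table that \<open>n < T\<close> by (metis le_less less_imp_le_nat order.strict_trans2)
    then have "hist_bit H n \<longleftrightarrow> reach W (active W) n (wit_lo1 n) (wit_hi n) \<and>
        reach W (active W) n (wit_lo2 n) (wit_hi n)"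
      using assms(1) that IH(1) reach_tab_eq_reach[of n H W P T] unfolding valid_history_def by simp
    then show ?thesis using active_unfold[of W n] by (simp add: activation_def)
  qed
  show ?case using IH history table by (auto simp: less_Suc_eq)
qed simp

lemma certified_iff_interpolant: "certified W x y \<longleftrightarrow> interpolant W x y"
proof
  assume "certified W x y"
  then obtain T H P where c: "valid_history W H P T" "valid_table W H P T" "reach_tab W H P T x y"
    unfolding certified_def by blast
  then show "interpolant W x y"
    using certificate_correct[OF c(1,2), of "Suc T"] reach_tab_eq_reach[of T H W P T]
    unfolding interpolant_def by auto
next
  assume "interpolant W x y"
  then obtain T where reach: "reach W (active W) T x y" unfolding interpolant_def by blast
  define H where "H = list_encode (map (\<lambda>s. of_bool (active W s)) [0..<T])"
  define P where "P = list_encode (map (\<lambda>u. tab_entry T (realize W (active W) u)) [0..<Suc T])"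
  have H: "j < T \<Longrightarrow> hist_bit H j = active W j" for j by (simp add: H_def hist_bit_def)
  have P: "u \<le> T \<Longrightarrow> nthc P u = tab_entry T (realize W (active W) u)" for u
    by (simp add: P_def del: upt_Suc)
  have "valid_table W H P T" unfolding valid_table_def
  proof (intro conjI allI impI)
    show "lenc P = Suc T" by (simp add: P_def del: upt_Suc)
    fix u assume "u < Suc T"
    then show "nthc P u = tab_step W H P T u"
      using H P wit_less_odd[of u] by (subst tab_step_correct[where A = "active W"]) (auto elim!: oddE)
  qed
  moreover have "valid_history W H P T" unfolding valid_history_def
    using H P reach_tab_eq_reach[of _ H W P T] active_unfold[of W]
    by (auto simp: H_def activation_def)
  moreover have "reach_tab W H P T x y" using reach_tab_eq_reach[of T H W P T] H P reach by simp
  ultimately show "certified W x y" unfolding certified_def by blast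
qed

definition e_div2 :: "prexp \<Rightarrow> prexp" where
  "e_div2 x = e_sum x (e_le (MulE (NumE 2) (SucE (VarE 0))) (lift x))"

lemma sem_div2[simp]: "sem (e_div2 x) env = sem x env div 2"
proof -
  have "{i. i < sem x env \<and> 2 * Suc i \<le> sem x env} = {i. i < sem x env div 2}" by auto
  then show ?thesis by (simp add: e_div2_def sum_of_bool_eq_card)
qed

definition e_even :: "prexp \<Rightarrow> prexp" where "e_even x = e_eq x (MulE (NumE 2) (e_div2 x))"

lemma sem_even[simp]: "sem (e_even x) env = of_bool (even (sem x env))"
  by (auto simp: e_even_def dvd_mult_div_cancel elim: oddE)

definition e_wit_lo1 :: "prexp \<Rightarrow> prexp" where "e_wit_lo1 s = e_fst s"
definition e_wit_lo2 :: "prexp \<Rightarrow> prexp" where "e_wit_lo2 s = e_fst (e_snd s)"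
definition e_wit_hi :: "prexp \<Rightarrow> prexp" where "e_wit_hi s = e_fst (e_snd (e_snd s))"

lemma sem_wit[simp]:
  "sem (e_wit_lo1 s) env = wit_lo1 (sem s env)" "sem (e_wit_lo2 s) env = wit_lo2 (sem s env)"
  "sem (e_wit_hi s) env = wit_hi (sem s env)"
  by (simp_all add: e_wit_lo1_def e_wit_lo2_def e_wit_hi_def wit_lo1_def wit_lo2_def wit_hi_def)

definition e_hist_bit :: "prexp \<Rightarrow> prexp \<Rightarrow> prexp" where
  "e_hist_bit H s = e_not (e_eq (e_nth H s) (NumE 0))"

lemma sem_hist_bit[simp]: "sem (e_hist_bit H s) env = of_bool (hist_bit (sem H env) (sem s env))"
  by (simp add: e_hist_bit_def hist_bit_def)

definition option_code :: "nat option \<Rightarrow> nat" where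
  "option_code x = (case x of None \<Rightarrow> 0 | Some c \<Rightarrow> Suc c)"

definition e_tab_realize_by :: "prexp \<Rightarrow> prexp \<Rightarrow> prexp \<Rightarrow> prexp" where
  "e_tab_realize_by P t u =
     e_if (e_and (e_not (e_eq (e_nth P u) (NumE 0))) (e_le (e_snd (SubE (e_nth P u) (NumE 1))) t))
       (SucE (e_fst (SubE (e_nth P u) (NumE 1)))) (NumE 0)"

lemma sem_tab_realize_by[simp]:
  "sem (e_tab_realize_by P t u) env = option_code (tab_realize_by (sem P env) (sem t env) (sem u env))"
  by (simp add: e_tab_realize_by_def tab_realize_by_def option_code_def)

definition e_edge :: "prexp \<Rightarrow> prexp \<Rightarrow> prexp \<Rightarrow> prexp \<Rightarrow> prexp \<Rightarrow> prexp \<Rightarrow> prexp" where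
  "e_edge e H P t u v =
    e_or (e_and (e_even u) (e_and (e_even v) (e_halts_within e t (e_div2 u) (e_div2 v))))
    (e_or (e_and (e_not (e_even u)) (e_and (e_lt (e_div2 u) t) (e_eq v (e_wit_hi (e_div2 u)))))
    (e_or (e_and (e_not (e_even v)) (e_and (e_lt (e_div2 v) t) (e_and (e_hist_bit H (e_div2 v))
       (e_or (e_eq u (e_wit_lo1 (e_div2 v))) (e_eq u (e_wit_lo2 (e_div2 v)))))))
    (e_or (e_and (e_even u) (e_and (e_not (e_even v)) (e_and (e_lt (e_div2 v) t)
       (e_and (e_not (e_eq (e_tab_realize_by P t v) (NumE 0)))
         (e_halts_within e t (e_div2 u) (SubE (e_tab_realize_by P t v) (NumE 1)))))))
     (e_and (e_not (e_even u)) (e_and (e_even v) (e_and (e_lt (e_div2 u) t)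
       (e_and (e_not (e_eq (e_tab_realize_by P t u) (NumE 0)))
         (e_halts_within e t (SubE (e_tab_realize_by P t u) (NumE 1)) (e_div2 v)))))))))"

lemma sem_edge[simp]: "sem (e_edge e H P t u v) env =
  of_bool (edge (halts_within (sem e env)) (hist_bit (sem H env)) (tab_realize_by (sem P env) (sem t env))
    (sem t env) (sem u env) (sem v env))"
proof -
  have "(option_code x \<noteq> 0 \<and> Q (option_code x - 1)) \<longleftrightarrow> (\<exists>c. x = Some c \<and> Q c)" for x Q
    by (auto simp: option_code_def split: option.splits)
  from this[of "tab_realize_by (sem P env) (sem t env) (sem v env)"
      "halts_within (sem e env) (sem t env) (sem u env div 2)"]
    this[of "tab_realize_by (sem P env) (sem t env) (sem u env)"
      "\<lambda>c. halts_within (sem e env) (sem t env) c (sem v env div 2)"] show ?thesis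
    unfolding e_edge_def edge_def
    by (simp only: sem_or sem_and sem_not sem_eq sem_lt sem_even sem_div2 sem_halts_within sem_hist_bit
        sem_wit sem_tab_realize_by sem.simps(2,5) of_bool_neq_0 of_bool_eq_0 not_not conj_assoc)
qed

definition e_reach_tab :: "prexp \<Rightarrow> prexp \<Rightarrow> prexp \<Rightarrow> prexp \<Rightarrow> prexp \<Rightarrow> prexp \<Rightarrow> prexp" where
  "e_reach_tab e H P t u v = e_ex (SucE t) (e_and (e_le (NumE 2) (e_len (VarE 0)))
     (e_and (e_eq (e_hd (VarE 0)) (lift u)) (e_and (e_eq (e_nth (VarE 0) (SubE (e_len (VarE 0)) (NumE 1))) (lift v))
       (e_all (SubE (e_len (VarE 0)) (NumE 1)) (e_edge (lift2 e) (lift2 H) (lift2 P) (lift2 t)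
          (e_nth (VarE 1) (VarE 0)) (e_nth (VarE 1) (SucE (VarE 0))))))))"

lemma sem_reach_tab[simp]: "sem (e_reach_tab e H P t u v) env =
    of_bool (reach_tab (halts_within (sem e env)) (sem H env) (sem P env) (sem t env) (sem u env) (sem v env))"
  by (simp add: e_reach_tab_def reach_tab_def walk_code_def)

definition e_valid_history :: "prexp \<Rightarrow> prexp \<Rightarrow> prexp \<Rightarrow> prexp \<Rightarrow> prexp" where
  "e_valid_history e H P T = e_and (e_eq (e_len H) T) (e_all T (e_eq (e_hist_bit (lift H) (VarE 0))
     (e_and (e_reach_tab (lift e) (lift H) (lift P) (VarE 0) (e_wit_lo1 (VarE 0)) (e_wit_hi (VarE 0)))
            (e_reach_tab (lift e) (lift H) (lift P) (VarE 0) (e_wit_lo2 (VarE 0)) (e_wit_hi (VarE 0))))))"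

lemma sem_valid_history[simp]: "sem (e_valid_history e H P T) env =
    of_bool (valid_history (halts_within (sem e env)) (sem H env) (sem P env) (sem T env))"
proof -
  have "sem (VarE 0) (i # env) = i" for i by simp
  then show ?thesis unfolding e_valid_history_def valid_history_def
    by (simp only: sem_all sem_and sem_eq sem_len sem_hist_bit sem_reach_tab sem_lift sem_wit
        of_bool_neq_0 of_bool_eq_iff)
qed

definition e_realizes :: "prexp \<Rightarrow> prexp \<Rightarrow> prexp \<Rightarrow> prexp \<Rightarrow> prexp \<Rightarrow> prexp \<Rightarrow> prexp \<Rightarrow> prexp" where
  "e_realizes e H s a1 a2 b w = e_and (e_halts_within e (e_snd w) (e_fst w) b)
     (e_imp (e_hist_bit H s) (e_and (e_halts_within e (e_snd w) a1 (e_fst w)) (e_halts_within e (e_snd w) a2 (e_fst w))))"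

lemma sem_realizes[simp]: "sem (e_realizes e H s a1 a2 b w) env =
    of_bool (realizes (halts_within (sem e env)) (hist_bit (sem H env)) (sem s env) (sem a1 env) (sem a2 env)
      (sem b env) (sem w env))"
  by (simp add: e_realizes_def realizes_def)

definition e_bounded_least :: "prexp \<Rightarrow> prexp \<Rightarrow> prexp \<Rightarrow> prexp \<Rightarrow> prexp \<Rightarrow> prexp \<Rightarrow> prexp \<Rightarrow> prexp" where
  "e_bounded_least T e H s a1 a2 b = e_sum (SucE T) (e_all (SucE (VarE 0))
     (e_not (e_realizes (lift2 e) (lift2 H) (lift2 s) (lift2 a1) (lift2 a2) (lift2 b) (VarE 0))))"

lemma sem_bounded_least[simp]: "sem (e_bounded_least T e H s a1 a2 b) env =
    bounded_least (sem T env) (realizes (halts_within (sem e env)) (hist_bit (sem H env)) (sem s env)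
      (sem a1 env) (sem a2 env) (sem b env))"
  by (simp add: e_bounded_least_def bounded_least_def)

definition e_tab_step :: "prexp \<Rightarrow> prexp \<Rightarrow> prexp \<Rightarrow> prexp \<Rightarrow> prexp \<Rightarrow> prexp" where
  "e_tab_step e H P T u = e_if (e_even u) (SucE (e_pair (e_div2 u) (NumE 0)))
     (let s = e_div2 u; Ey = e_nth P (e_wit_hi s); E1 = e_nth P (e_wit_lo1 s); E2 = e_nth P (e_wit_lo2 s);
          b = e_fst (SubE Ey (NumE 1)); a1 = e_fst (SubE E1 (NumE 1)); a2 = e_fst (SubE E2 (NumE 1));
          w = e_bounded_least T e H s a1 a2 b;
          f = e_max w (e_max (e_snd (SubE Ey (NumE 1))) (e_max (e_snd (SubE E1 (NumE 1))) (e_snd (SubE E2 (NumE 1)))))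
      in e_if (e_and (e_not (e_eq Ey (NumE 0))) (e_and (e_not (e_eq E1 (NumE 0))) (e_and (e_not (e_eq E2 (NumE 0)))
           (e_and (e_ex (SucE T) (e_realizes (lift e) (lift H) (lift s) (lift a1) (lift a2) (lift b) (VarE 0)))
             (e_le f T)))))
         (SucE (e_pair (e_fst w) f)) (NumE 0))"

lemma sem_tab_step[simp]: "sem (e_tab_step e H P T u) env =
    tab_step (halts_within (sem e env)) (sem H env) (sem P env) (sem T env) (sem u env)"
proof -
  have "sem (VarE 0) (i # env) = i" for i by simp
  then show ?thesis unfolding e_tab_step_def tab_step_def Let_def
    by (simp only: sem_if sem_even sem_pair sem_div2 sem_nth sem_wit sem_fst sem_snd sem.simps(2,3,5)
        sem_and sem_not sem_eq sem_ex sem_realizes sem_lift sem_bounded_least sem_max sem_le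
        of_bool_neq_0 of_bool_eq_0 not_not)
qed

definition e_valid_table :: "prexp \<Rightarrow> prexp \<Rightarrow> prexp \<Rightarrow> prexp \<Rightarrow> prexp" where
  "e_valid_table e H P T = e_and (e_eq (e_len P) (SucE T))
     (e_all (SucE T) (e_eq (e_nth (lift P) (VarE 0)) (e_tab_step (lift e) (lift H) (lift P) (lift T) (VarE 0))))"

lemma sem_valid_table[simp]: "sem (e_valid_table e H P T) env =
    of_bool (valid_table (halts_within (sem e env)) (sem H env) (sem P env) (sem T env))"
proof -
  have "sem (VarE 0) (i # env) = i" for i by simp
  then show ?thesis unfolding e_valid_table_def valid_table_def
    by (simp only: sem_all sem_and sem_eq sem_len sem_nth sem_tab_step sem_lift sem.simps(3) of_bool_neq_0)
qed

text \<open>A certificate \<open>\<langle>T, H, P\<rangle>\<close> for \<open>(x, y)\<close> and the program \<open>e\<close>, all in the environment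
  \<open>[\<langle>T, H, P\<rangle>, e, x, y]\<close>; the expression vanishes exactly on valid certificates.\<close>

definition e_certificate :: prexp where
  "e_certificate = (let T = e_fst (VarE 0); H = e_fst (e_snd (VarE 0)); P = e_snd (e_snd (VarE 0)) in
     e_not (e_and (e_valid_history (VarE 1) H P T)
       (e_and (e_valid_table (VarE 1) H P T) (e_reach_tab (VarE 1) H P T (VarE 2) (VarE 3)))))"

lemma sem_certificate_eq_0_iff: "(\<exists>w. sem e_certificate [w, e, x, y] = 0) \<longleftrightarrow> certified (halts_within e) x y"
proof
  assume "\<exists>w. sem e_certificate [w, e, x, y] = 0"
  then obtain w where "sem e_certificate [w, e, x, y] = 0" ..
  then have "valid_history (halts_within e) (pfst (psnd w)) (psnd (psnd w)) (pfst w) \<and>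
      valid_table (halts_within e) (pfst (psnd w)) (psnd (psnd w)) (pfst w) \<and>
      reach_tab (halts_within e) (pfst (psnd w)) (psnd (psnd w)) (pfst w) x y"
    by (simp add: e_certificate_def Let_def)
  then show "certified (halts_within e) x y" unfolding certified_def by blast
next
  assume "certified (halts_within e) x y"
  then obtain T H P where "valid_history (halts_within e) H P T" "valid_table (halts_within e) H P T"
    "reach_tab (halts_within e) H P T x y" unfolding certified_def by blast
  then have "sem e_certificate [prod_encode (T, prod_encode (H, P)), e, x, y] = 0"
    by (simp add: e_certificate_def Let_def)
  then show "\<exists>w. sem e_certificate [w, e, x, y] = 0" by blast
qed

lemma uniformly_ce_rels_interpolant: "uniformly_ce_rels (\<lambda>e. interpolant (halts_within e))"
proof -
  have "(\<lambda>e x y. \<exists>w. sem e_certificate [w, e, x, y] = 0) = (\<lambda>e. interpolant (halts_within e))"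
    unfolding sem_certificate_eq_0_iff certified_iff_interpolant ..
  then show ?thesis using uniformly_ce_rels_prexp[of e_certificate] by simp
qed


lemma stage_mono_halts_within: "stage_mono (halts_within e)"
  unfolding stage_mono_def using halts_within_mono by blast

lemma ce_rel_double: "ce_rel (\<lambda>n m. m = 2 * n)"
proof -
  let ?p = "e_not (e_eq (VarE 2) (MulE (NumE 2) (VarE 1)))"
  have "(\<exists>w. sem ?p [w, n, m] = 0) \<longleftrightarrow> m = 2 * n" for n m by simp
  then have "(\<lambda>n m. \<exists>w. sem ?p [w, n, m] = 0) = (\<lambda>n m. m = 2 * n)" by (intro ext)
  then show ?thesis using ce_rel_prexp[of ?p] by simp
qed

lemma computably_homeomorphic_interpolant:
  assumes "ce_rel R" "transp R" "interpolable R"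
  shows "\<exists>e. computably_homeomorphic (interpolant (halts_within e)) R"
proof -
  obtain g where g: "\<And>x y. R x y \<longleftrightarrow> (\<exists>z. eval g [x, y] z)" using assms(1) unfolding ce_rel_def by blast
  let ?W = "halts_within (recf_code g)"
  have enum: "\<And>a b. R a b \<longleftrightarrow> (\<exists>t. ?W t a b)" using g halts_within_iff_eval by blast
  note real = stage_mono_halts_within enum assms(2,3)
  have "ce_rel (\<lambda>n m. interpolant ?W n (sem (MulE (NumE 2) (VarE 1)) [n, m]))"
    using uniformly_ce_rels_interpolant by (rule ce_rel_instance)
  then have "ce_rel (\<lambda>n m. interpolant ?W n (2 * m))" by simp
  then have "computably_homeomorphic (interpolant ?W) R"
    using interpolant_iff_real[OF real] real_pt_even[OF real] ce_rel_double
    by (intro computably_homeomorphic_pullback[of _ _ "real_pt ?W" "\<lambda>a. 2 * a"]) simp_all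
  then show ?thesis by blast
qed

theorem theorem21:
  shows "\<exists>Rs :: nat \<Rightarrow> nat \<Rightarrow> nat \<Rightarrow> bool.
           uniformly_ce_rels Rs \<and>
           (\<forall>i. transp (Rs i) \<and> interpolable (Rs i)) \<and>
           (\<forall>R. ce_rel R \<and> transp R \<and> interpolable R \<longrightarrow>
                (\<exists>i. computably_homeomorphic (Rs i) R))"
proof (intro exI[of _ "\<lambda>e. interpolant (halts_within e)"] conjI allI impI)
  show "uniformly_ce_rels (\<lambda>e. interpolant (halts_within e))"
    by (rule uniformly_ce_rels_interpolant)
  fix e
  show "transp (interpolant (halts_within e))"
    by (rule transp_interpolant[OF stage_mono_halts_within])
  show "interpolable (interpolant (halts_within e))"
    by (rule interpolable_interpolant[OF stage_mono_halts_within])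
next
  fix R assume "ce_rel R \<and> transp R \<and> interpolable R"
  then show "\<exists>e. computably_homeomorphic (interpolant (halts_within e)) R"
    using computably_homeomorphic_interpolant by blast
qed

end
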